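(* There exist a $\mathcal{C}^\infty$-smooth closed curve $\Gamma$ and two angles $\theta_1\neq\theta_2$ such that the map $\Phi=\Phi_{\theta_2}\circ\Phi_{\theta_1}$ is a well-defined orientation-preserving circle homeomorphism whose rotation number $\rho(\Gamma;\theta_1,\theta_2)$ is rational, and $(\Gamma,\ell_{\theta_1}\cup\ell_{\theta_2})$ is a Heisenberg Uniqueness Pair.
   Context: Let $\Gamma$ be parametrized by a one-to-one $1$-periodic map $\gamma:\mathbb{R}/\mathbb{Z}\to\mathbb{R}^2$. For an angle $\theta$ (identified with $(\cos\theta,\sin\theta)$), $\Phi_\theta(s)$ is defined by $\{t:\langle\gamma(t),\theta\rangle=\langle\gamma(s),\theta\rangle\}=\{s,\Phi_\theta(s)\}$, i.e. $\gamma(\Phi_\theta(s))$ is the other intersection point of $\Gamma$ with the line through $\gamma(s)$ orthogonal to $\theta$. For an orientation-preserving circle homeomorphism $\Phi$ with lift $\tilde\Phi:\mathbb{R}\to\mathbb{R}$, the rotation number is $\rho(\Phi)=\lim_{n\to\infty}\frac{\tilde\Phi^n(x)-x}{n}\bmod 1$, and $\rho(\Gamma;\theta_1,\theta_2)=\rho(\Phi_{\theta_2}\circ\Phi_{\theta_1})$. $\widehat{\mu}(x,y)=\int e^{-i(xs+yt)}\,d\mu(s,t)$; $\ell_\theta=\{t(\cos\theta,\sin\theta):t\in\mathbb{R}\}$; $\mathcal{AC}(\Gamma)$ is the set of finite complex measures on $\Gamma$ absolutely continuous with respect to arc length; $(\Gamma,\Lambda)$ is a Heisenberg Uniqueness Pair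 if every $\mu\in\mathcal{AC}(\Gamma)$ with $\widehat{\mu}=0$ on $\Lambda$ satisfies $\mu=0$. *)

theory Defs
  imports "HOL-Analysis.Analysis"
begin

definition dir :: "real \<Rightarrow> real \<times> real" where
  "dir \<theta> = (cos \<theta>, sin \<theta>)"

definition smooth_curve :: "(real \<Rightarrow> real \<times> real) \<Rightarrow> bool" where
  "smooth_curve \<gamma> \<longleftrightarrow> (\<exists>D :: nat \<Rightarrow> real \<Rightarrow> real \<times> real.
      D 0 = \<gamma> \<and> (\<forall>n t. (D n has_vector_derivative D (Suc n) t) (at t)))"

definition smooth_closed_curve :: "(real \<Rightarrow> real \<times> real) \<Rightarrow> bool" where
  "smooth_closed_curve \<gamma> \<longleftrightarrow> smooth_curve \<gamma>
     \<and> (\<forall>t. \<gamma> (t + 1) = \<gamma> t)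
     \<and> (\<forall>s t. \<gamma> s = \<gamma> t \<longrightarrow> s - t \<in> \<int>)
     \<and> (\<forall>t. vector_derivative \<gamma> (at t) \<noteq> 0)"

text \<open>Points of the circle R/Z are represented by their representatives in [0,1).\<close>
definition level_set :: "(real \<Rightarrow> real \<times> real) \<Rightarrow> real \<Rightarrow> real \<Rightarrow> real set" where
  "level_set \<gamma> \<theta> s = {t \<in> {0..<1}. \<gamma> t \<bullet> dir \<theta> = \<gamma> s \<bullet> dir \<theta>}"

text \<open>Phi_theta is well defined: every line orthogonal to theta through a point of Gamma
  meets Gamma in the point itself and at most one other point.\<close>
definition Phi_well_defined :: "(real \<Rightarrow> real \<times> real) \<Rightarrow> real \<Rightarrow> bool" where
  "Phi_well_defined \<gamma> \<theta> \<longleftrightarrow> (\<forall>s. finite (level_set \<gamma> \<theta> s) \<and> card (level_set \<gamma> \<theta> s) \<le> 2)"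

definition Phi :: "(real \<Rightarrow> real \<times> real) \<Rightarrow> real \<Rightarrow> real \<Rightarrow> real" where
  "Phi \<gamma> \<theta> s = (if \<exists>t \<in> level_set \<gamma> \<theta> s. t \<noteq> frac s
                  then (THE t. t \<in> level_set \<gamma> \<theta> s \<and> t \<noteq> frac s) else frac s)"

definition is_lift :: "(real \<Rightarrow> real) \<Rightarrow> (real \<Rightarrow> real) \<Rightarrow> bool" where
  "is_lift F \<Psi> \<longleftrightarrow> continuous_on UNIV F \<and> strict_mono F \<and> (\<forall>x. F (x + 1) = F x + 1)
      \<and> (\<forall>x. frac (F x) = frac (\<Psi> x))"

definition orientation_preserving_circle_homeo :: "(real \<Rightarrow> real) \<Rightarrow> bool" where
  "orientation_preserving_circle_homeo \<Psi> \<longleftrightarrow> (\<exists>F. is_lift F \<Psi>)"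

definition rotation_number :: "(real \<Rightarrow> real) \<Rightarrow> real" where
  "rotation_number \<Psi> = frac (lim (\<lambda>n. (((SOME F. is_lift F \<Psi>) ^^ n) 0 - 0) / real n))"

definition rho :: "(real \<Rightarrow> real \<times> real) \<Rightarrow> real \<Rightarrow> real \<Rightarrow> real" where
  "rho \<gamma> \<theta>1 \<theta>2 = rotation_number (Phi \<gamma> \<theta>2 \<circ> Phi \<gamma> \<theta>1)"

definition line :: "real \<Rightarrow> (real \<times> real) set" where
  "line \<theta> = {t *\<^sub>R dir \<theta> | t. True}"

text \<open>A measure in AC(Gamma) is f ds with f integrable w.r.t. arc length on Gamma; via the
  parametrization, ds = |gamma'(t)| dt on one period [0,1].\<close>
definition AC_density :: "(real \<Rightarrow> real \<times> real) \<Rightarrow> (real \<times> real \<Rightarrow> complex) \<Rightarrow> bool" where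
  "AC_density \<gamma> f \<longleftrightarrow> set_integrable lborel {0..1}
      (\<lambda>t. f (\<gamma> t) * complex_of_real (norm (vector_derivative \<gamma> (at t))))"

definition fourier_AC :: "(real \<Rightarrow> real \<times> real) \<Rightarrow> (real \<times> real \<Rightarrow> complex) \<Rightarrow> real \<times> real \<Rightarrow> complex" where
  "fourier_AC \<gamma> f p = (LINT t:{0..1}|lborel.
      exp (- \<i> * complex_of_real (fst p * fst (\<gamma> t) + snd p * snd (\<gamma> t)))
      * f (\<gamma> t) * complex_of_real (norm (vector_derivative \<gamma> (at t))))"

definition AC_zero :: "(real \<Rightarrow> real \<times> real) \<Rightarrow> (real \<times> real \<Rightarrow> complex) \<Rightarrow> bool" where
  "AC_zero \<gamma> f \<longleftrightarrow> (AE t in lborel. t \<in> {0..1} \<longrightarrow>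
      f (\<gamma> t) * complex_of_real (norm (vector_derivative \<gamma> (at t))) = 0)"

definition HUP :: "(real \<Rightarrow> real \<times> real) \<Rightarrow> (real \<times> real) set \<Rightarrow> bool" where
  "HUP \<gamma> \<Lambda> \<longleftrightarrow> (\<forall>f. AC_density \<gamma> f \<and> (\<forall>p \<in> \<Lambda>. fourier_AC \<gamma> f p = 0) \<longrightarrow> AC_zero \<gamma> f)"

end

theory Submission
  imports Defs "HOL-Probability.Probability"
begin

text \<open>
  The curve is \<open>\<gamma>(t) = (cos 2\<pi>t - sin 2\<pi>t, (2 cos 2\<pi>t + sin 2\<pi>t) / sqrt (1 + 3 cos\<^sup>2 2\<pi>t))\<close>,
  with \<open>\<theta>\<^sub>1 = 0\<close> and \<open>\<theta>\<^sub>2 = \<pi>/2\<close>. Each coordinate takes every value exactly at the points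
  \<open>t + \<int>\<close> and \<open>\<sigma> t + \<int>\<close> for a decreasing involution \<open>\<sigma>\<close>: for the first coordinate
  \<open>\<sigma>\<^sub>1 t = -t - 1/4\<close>, for the second \<open>\<sigma>\<^sub>2\<close> is a reflection conjugated by the angle map of
  the linear map \<open>diag(1, 1/2)\<close>. The lift \<open>F = \<sigma>\<^sub>2 \<circ> \<sigma>\<^sub>1\<close> of \<open>\<Phi>\<close> satisfies
  \<open>F(j/4) = j/4 + 1/2\<close>, so \<open>\<rho> = 1/2\<close>, and \<open>\<psi> = F \<circ> F - 1\<close> fixes exactly the points of \<open>\<int>/4\<close>.

  If \<open>\<mu> = g dt\<close> has Fourier transform vanishing on \<open>\<ell>\<^sub>\<theta>\<close>, Levy's uniqueness theorem shows
  that the push-forward of \<open>\<mu>\<close> under the corresponding coordinate vanishes; since that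
  coordinate identifies \<open>t\<close> with \<open>\<sigma> t\<close>, \<open>\<mu>\<close> is antisymmetric under \<open>\<sigma>\<close>. Hence \<open>\<mu>\<close> is
  \<open>\<psi>\<close>-invariant. On a quarter interval \<open>\<psi>\<close> is increasing without fixed points, so the
  images of \<open>[a, \<psi> a)\<close> under the iterates of \<open>\<psi>\<close> are disjoint sets of equal \<open>\<mu>\<close>-measure
  inside a set of finite total variation; thus \<open>\<mu>\<close> vanishes there.
\<close>

section \<open>The angle map of a diagonal linear map\<close>

text \<open>\<open>stretch_angle k a\<close> is the polar angle of \<open>(cos a, k sin a)\<close>, chosen within \<open>\<pi>/2\<close> of \<open>a\<close>.\<close>

definition stretch_angle :: "real \<Rightarrow> real \<Rightarrow> real" where
  "stretch_angle k a = a + arctan ((k - 1) * sin a * cos a / ((cos a)\<^sup>2 + k * (sin a)\<^sup>2))"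

lemma cos_sq_plus_mult_sin_sq_pos: "(k::real) > 0 \<Longrightarrow> (cos a)\<^sup>2 + k * (sin a)\<^sup>2 > 0"
proof -
  assume k: "k > 0"
  have "cos a \<noteq> 0 \<or> sin a \<noteq> 0" using sin_cos_squared_add2[of a] by (cases "cos a = 0") auto
  then show ?thesis using k
    by (metis add_nonneg_pos add_pos_nonneg mult_pos_pos zero_less_power2 zero_le_power2 mult_nonneg_nonneg less_eq_real_def)
qed

lemma
  assumes k: "k > 0"
  shows cos_stretch_angle: "cos (stretch_angle k a) = cos a / sqrt ((cos a)\<^sup>2 + k\<^sup>2 * (sin a)\<^sup>2)"
    and sin_stretch_angle: "sin (stretch_angle k a) = k * sin a / sqrt ((cos a)\<^sup>2 + k\<^sup>2 * (sin a)\<^sup>2)"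
proof -
  define c where "c = cos a"
  define s where "s = sin a"
  define D where "D = c\<^sup>2 + k * s\<^sup>2"
  define r where "r = (k - 1) * s * c / D"
  have cs: "c\<^sup>2 + s\<^sup>2 = 1" unfolding c_def s_def by simp
  have D: "D > 0" unfolding D_def c_def s_def using cos_sq_plus_mult_sin_sq_pos[OF k] .
  have E: "c\<^sup>2 + k\<^sup>2 * s\<^sup>2 > 0"
    unfolding c_def s_def using cos_sq_plus_mult_sin_sq_pos[of "k\<^sup>2"] k by simp
  have A: "stretch_angle k a = a + arctan r" unfolding stretch_angle_def r_def D_def c_def s_def by simp
  have "1 + r\<^sup>2 = (D\<^sup>2 + ((k - 1) * s * c)\<^sup>2) / D\<^sup>2" unfolding r_def using D
    by (simp add: field_simps power2_eq_square)
  also have "D\<^sup>2 + ((k - 1) * s * c)\<^sup>2 = (c\<^sup>2 + k\<^sup>2 * s\<^sup>2) * (c\<^sup>2 + s\<^sup>2)"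
    unfolding D_def by (simp add: power2_eq_square algebra_simps)
  finally have r2: "1 + r\<^sup>2 = (c\<^sup>2 + k\<^sup>2 * s\<^sup>2) / D\<^sup>2" using cs by simp
  have sq: "sqrt (1 + r\<^sup>2) = sqrt (c\<^sup>2 + k\<^sup>2 * s\<^sup>2) / D"
    using D by (simp add: r2 real_sqrt_divide)
  have sp: "sqrt (c\<^sup>2 + k\<^sup>2 * s\<^sup>2) > 0" using E by simp
  have "cos (stretch_angle k a) = (c - s * r) / sqrt (1 + r\<^sup>2)"
    unfolding A cos_add cos_arctan sin_arctan c_def s_def by (simp add: diff_divide_distrib)
  also have "c - s * r = c / D * (c\<^sup>2 + s\<^sup>2)" unfolding r_def D_def using D[unfolded D_def]
    by (simp add: field_simps power2_eq_square)
  finally show "cos (stretch_angle k a) = cos a / sqrt ((cos a)\<^sup>2 + k\<^sup>2 * (sin a)\<^sup>2)"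
    using D sp cs by (simp add: sq c_def[symmetric] s_def[symmetric] field_simps)
  have "sin (stretch_angle k a) = (s + c * r) / sqrt (1 + r\<^sup>2)"
    unfolding A sin_add cos_arctan sin_arctan c_def s_def by (simp add: add_divide_distrib)
  also have "s + c * r = k * s / D * (c\<^sup>2 + s\<^sup>2)" unfolding r_def D_def using D[unfolded D_def]
    by (simp add: field_simps power2_eq_square)
  finally show "sin (stretch_angle k a) = k * sin a / sqrt ((cos a)\<^sup>2 + k\<^sup>2 * (sin a)\<^sup>2)"
    using D sp cs by (simp add: sq c_def[symmetric] s_def[symmetric] field_simps)
qed

lemma stretch_angle_near: "\<bar>stretch_angle k a - a\<bar> < pi/2"
  unfolding stretch_angle_def
  using arctan_bounded[of "(k - 1) * sin a * cos a / ((cos a)\<^sup>2 + k * (sin a)\<^sup>2)"] by auto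

lemma stretch_angle_add_pi: "stretch_angle k (a + pi) = stretch_angle k a + pi"
  unfolding stretch_angle_def by (simp add: sin_add cos_add)

lemma stretch_angle_diff_pi: "stretch_angle k (a - pi) = stretch_angle k a - pi"
  using stretch_angle_add_pi[of k "a - pi"] by simp

lemma stretch_angle_add_int_pi: "stretch_angle k (a + of_int n * pi) = stretch_angle k a + of_int n * pi"
proof (induction n arbitrary: a rule: int_induct[where k = 0])
  case base then show ?case by simp
next
  case (step1 i) then show ?case
    using stretch_angle_add_pi[of k "a + of_int i * pi"] by (simp add: algebra_simps)
next
  case (step2 i) then show ?case
    using stretch_angle_diff_pi[of k "a + of_int i * pi"] by (simp add: algebra_simps)
qed

lemma stretch_angle_add_2pi_int: "stretch_angle k (a + 2 * pi * of_int n) = stretch_angle k a + 2 * pi * of_int n"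
  using stretch_angle_add_int_pi[of k a "2 * n"] by (simp add: algebra_simps)

lemma continuous_on_stretch_angle: "k > 0 \<Longrightarrow> continuous_on UNIV (stretch_angle k)"
  unfolding stretch_angle_def using cos_sq_plus_mult_sin_sq_pos
  by (intro continuous_intros) (auto simp: less_imp_neq[symmetric])

lemma stretch_angle_int_half_pi: "stretch_angle k (of_int n * (pi/2)) = of_int n * (pi/2)"
proof -
  have "sin (2 * (of_int n * (pi/2))) = 0"
    using sin_zero_iff_int2[of "of_int n * pi"] by auto
  then have "sin (of_int n * (pi/2)) * cos (of_int n * (pi/2)) = 0"
    by (simp only: sin_double)
  then show ?thesis unfolding stretch_angle_def by simp
qed

lemma cos_sin_eq_imp_eq:
  fixes x y :: real
  assumes "cos x = cos y" "sin x = sin y" "\<bar>x - y\<bar> < 2 * pi"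
  shows "x = y"
proof -
  obtain n :: int where n: "x = y + 2 * pi * n" using sin_cos_eq_iff[of x y] assms by auto
  have "\<bar>2 * pi * n\<bar> < 2 * pi" using assms(3) n by simp
  then have "\<bar>real_of_int n\<bar> < 1" by (simp add: abs_mult)
  then have "n = 0" by linarith
  then show ?thesis using n by simp
qed

lemma stretch_angle_inverse:
  assumes k: "k > 0"
  shows "stretch_angle k (stretch_angle (1/k) a) = a"
proof -
  define b where "b = stretch_angle (1/k) a"
  define \<rho> where "\<rho> = sqrt ((cos a)\<^sup>2 + (1/k)\<^sup>2 * (sin a)\<^sup>2)"
  have rp: "\<rho> > 0" unfolding \<rho>_def using cos_sq_plus_mult_sin_sq_pos[of "(1/k)\<^sup>2" a] k by simp
  have cb: "cos b = cos a / \<rho>" and sb: "sin b = (1/k) * sin a / \<rho>"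
    unfolding b_def \<rho>_def using cos_stretch_angle[of "1/k" a] sin_stretch_angle[of "1/k" a] k by auto
  have "(cos b)\<^sup>2 + k\<^sup>2 * (sin b)\<^sup>2 = ((cos a)\<^sup>2 + (sin a)\<^sup>2) / \<rho>\<^sup>2"
    unfolding cb sb using k rp by (simp add: field_simps power2_eq_square)
  also have "\<dots> = (1 / \<rho>)\<^sup>2" by (simp add: power_divide)
  finally have e: "sqrt ((cos b)\<^sup>2 + k\<^sup>2 * (sin b)\<^sup>2) = 1 / \<rho>" using rp by simp
  have c: "cos (stretch_angle k b) = cos a" using cos_stretch_angle[OF k, of b] e cb rp by simp
  have s: "sin (stretch_angle k b) = sin a" using sin_stretch_angle[OF k, of b] e sb rp k by simp
  have "\<bar>stretch_angle k b - a\<bar> < 2 * pi"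
    using stretch_angle_near[of k b] stretch_angle_near[of "1/k" a] unfolding b_def by linarith
  then show ?thesis using cos_sin_eq_imp_eq[OF c s] unfolding b_def by simp
qed

lemma stretch_angle_inverse': "k > 0 \<Longrightarrow> stretch_angle (1/k) (stretch_angle k a) = a"
  using stretch_angle_inverse[of "1/k" a] by simp

lemma strict_mono_stretch_angle:
  assumes k: "k > 0"
  shows "strict_mono (stretch_angle k)"
proof (rule strict_monoI)
  fix x y :: real assume xy: "x < y"
  have inj: "inj (stretch_angle k)" using stretch_angle_inverse'[OF k] by (metis injI)
  have "(stretch_angle k x < stretch_angle k y \<and> stretch_angle k y < stretch_angle k (y + pi))
      \<or> (stretch_angle k (y + pi) < stretch_angle k y \<and> stretch_angle k y < stretch_angle k x)"
    by (rule continuous_inj_imp_mono[OF xy])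
       (use xy inj in \<open>auto intro: continuous_on_subset[OF continuous_on_stretch_angle[OF k]] inj_on_subset\<close>)
  then show "stretch_angle k x < stretch_angle k y" using stretch_angle_add_pi[of k y] by auto
qed

section \<open>Uniqueness of the Fourier transform of a push-forward\<close>

lemma char_distr_density:
  fixes P u :: "real \<Rightarrow> real"
  assumes [measurable]: "P \<in> borel_measurable borel" "u \<in> borel_measurable borel"
    and nn: "\<And>t. 0 \<le> P t"
  shows "char (distr (density lborel (\<lambda>t. ennreal (P t))) borel u) \<tau> =
      (\<integral>t. P t *\<^sub>R iexp (\<tau> * u t) \<partial>lborel)"
proof -
  have "char (distr (density lborel (\<lambda>t. ennreal (P t))) borel u) \<tau> =
      (\<integral>t. iexp (\<tau> * u t) \<partial>(density lborel (\<lambda>t. ennreal (P t))))"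
    unfolding char_def by (subst integral_distr) auto
  also have "\<dots> = (\<integral>t. P t *\<^sub>R iexp (\<tau> * u t) \<partial>lborel)"
    by (subst integral_density) (auto simp: nn)
  finally show ?thesis .
qed

lemma real_distribution_distr_density:
  fixes P u :: "real \<Rightarrow> real"
  assumes [measurable]: "P \<in> borel_measurable borel" "u \<in> borel_measurable borel"
    and nn: "\<And>t. 0 \<le> P t" and int: "integrable lborel P" and one: "(\<integral>t. P t \<partial>lborel) = 1"
  shows "real_distribution (distr (density lborel (\<lambda>t. ennreal (P t))) borel u)"
proof -
  have "emeasure (density lborel (\<lambda>t. ennreal (P t))) UNIV = 1"
    using int one nn by (subst emeasure_density) (auto simp: nn_integral_eq_integral)
  then have "prob_space (density lborel (\<lambda>t. ennreal (P t)))"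
    by (intro prob_spaceI) auto
  then have "prob_space (distr (density lborel (\<lambda>t. ennreal (P t))) borel u)"
    by (intro prob_space.prob_space_distr) auto
  then show ?thesis unfolding real_distribution_def real_distribution_axioms_def by auto
qed

lemma integrable_indicator_mult:
  fixes f :: "real \<Rightarrow> real"
  shows "integrable lborel f \<Longrightarrow> S \<in> sets borel \<Longrightarrow> integrable lborel (\<lambda>t. indicator S t * f t)"
  by (subst mult.commute) (rule integrable_real_mult_indicator, auto)

lemma emeasure_distr_density_eq_integral:
  fixes P u :: "real \<Rightarrow> real"
  assumes [measurable]: "u \<in> borel_measurable borel"
    and Pi: "integrable lborel P" and Pn: "\<And>t. 0 \<le> P t" and B: "B \<in> sets borel"
  shows "emeasure (distr (density lborel (\<lambda>t. ennreal (P t))) borel u) B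
      = ennreal (\<integral>t. indicator (u -` B) t * P t \<partial>lborel)"
proof -
  have [measurable]: "P \<in> borel_measurable borel" using Pi by (simp add: measurable_completion)
  have uB[measurable]: "u -` B \<in> sets borel" using measurable_sets_borel[of u borel B] B by simp
  have "emeasure (distr (density lborel (\<lambda>t. ennreal (P t))) borel u) B
      = (\<integral>\<^sup>+t. ennreal (P t) * indicator (u -` B) t \<partial>lborel)"
    using B by (simp add: emeasure_distr emeasure_density)
  also have "\<dots> = (\<integral>\<^sup>+t. ennreal (indicator (u -` B) t * P t) \<partial>lborel)"
    by (intro nn_integral_cong) (simp split: split_indicator)
  also have "\<dots> = ennreal (\<integral>t. indicator (u -` B) t * P t \<partial>lborel)"
    using Pi B Pn by (intro nn_integral_eq_integral AE_I2 integrable_indicator_mult) auto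
  finally show ?thesis .
qed

lemma distr_density_eq_of_fourier_eq:
  fixes u P N :: "real \<Rightarrow> real"
  assumes [measurable]: "u \<in> borel_measurable borel"
    and Pi: "integrable lborel P" and Ni: "integrable lborel N"
    and Pn: "\<And>t. 0 \<le> P t" and Nn: "\<And>t. 0 \<le> N t"
    and P1: "(\<integral>t. P t \<partial>lborel) = 1" and N1: "(\<integral>t. N t \<partial>lborel) = 1"
    and eq: "\<And>\<tau>. (\<integral>t. P t *\<^sub>R iexp (\<tau> * u t) \<partial>lborel) = (\<integral>t. N t *\<^sub>R iexp (\<tau> * u t) \<partial>lborel)"
  shows "distr (density lborel (\<lambda>t. ennreal (P t))) borel u = distr (density lborel (\<lambda>t. ennreal (N t))) borel u"
proof (rule Levy_uniqueness)
  have [measurable]: "P \<in> borel_measurable borel" "N \<in> borel_measurable borel"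
    using Pi Ni by (simp_all add: measurable_completion)
  show "real_distribution (distr (density lborel (\<lambda>t. ennreal (P t))) borel u)"
    "real_distribution (distr (density lborel (\<lambda>t. ennreal (N t))) borel u)"
    using Pi Ni Pn Nn P1 N1 by (auto intro!: real_distribution_distr_density)
  show "char (distr (density lborel (\<lambda>t. ennreal (P t))) borel u)
      = char (distr (density lborel (\<lambda>t. ennreal (N t))) borel u)"
    using eq Pn Nn by (simp add: char_distr_density fun_eq_iff)
qed

lemma integral_preimage_eq_of_fourier_eq:
  fixes u P N :: "real \<Rightarrow> real"
  assumes [measurable]: "u \<in> borel_measurable borel"
    and Pi: "integrable lborel P" and Ni: "integrable lborel N"
    and Pn: "\<And>t. 0 \<le> P t" and Nn: "\<And>t. 0 \<le> N t"
    and eq: "\<And>\<tau>. (\<integral>t. P t *\<^sub>R iexp (\<tau> * u t) \<partial>lborel) = (\<integral>t. N t *\<^sub>R iexp (\<tau> * u t) \<partial>lborel)"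
    and B: "B \<in> sets borel"
  shows "(\<integral>t. indicator (u -` B) t * P t \<partial>lborel) = (\<integral>t. indicator (u -` B) t * N t \<partial>lborel)"
proof -
  have [measurable]: "P \<in> borel_measurable borel" "N \<in> borel_measurable borel"
    using Pi Ni by (simp_all add: measurable_completion)
  have [measurable]: "u -` B \<in> sets borel" using measurable_sets_borel[of u borel B] B by simp
  have cPN: "(\<integral>t. P t \<partial>lborel) = (\<integral>t. N t \<partial>lborel)"
    using eq[of 0] by (simp add: scaleR_conv_of_real integral_complex_of_real)
  define c where "c = (\<integral>t. P t \<partial>lborel)"
  have "0 \<le> c" unfolding c_def by (auto intro: integral_nonneg_AE simp: Pn)
  then consider "c = 0" | "c > 0" by linarith
  then show ?thesis
  proof cases
    case 1
    have "AE t in lborel. P t = 0"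
      using 1 Pi unfolding c_def by (simp add: integral_nonneg_eq_0_iff_AE Pn)
    moreover have "AE t in lborel. N t = 0"
      using 1 Ni cPN unfolding c_def by (simp add: integral_nonneg_eq_0_iff_AE Nn)
    ultimately have "AE t in lborel. indicator (u -` B) t * P t = 0" "AE t in lborel. indicator (u -` B) t * N t = 0"
      by (auto elim: AE_mp)
    then show ?thesis by (simp add: integral_eq_zero_AE)
  next
    case 2
    have "(\<integral>t. (F t / c) *\<^sub>R iexp (\<tau> * u t) \<partial>lborel) = (1/c) *\<^sub>R (\<integral>t. F t *\<^sub>R iexp (\<tau> * u t) \<partial>lborel)"
      for F :: "real \<Rightarrow> real" and \<tau>
      by (subst integral_scaleR_right[symmetric]) (simp add: scaleR_scaleR)
    then have "distr (density lborel (\<lambda>t. ennreal (P t / c))) borel u = distr (density lborel (\<lambda>t. ennreal (N t / c))) borel u"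
      using 2 Pi Ni Pn Nn cPN eq unfolding c_def by (intro distr_density_eq_of_fourier_eq) auto
    then have "emeasure (distr (density lborel (\<lambda>t. ennreal (P t / c))) borel u) B
        = emeasure (distr (density lborel (\<lambda>t. ennreal (N t / c))) borel u) B"
      by simp
    moreover have "emeasure (distr (density lborel (\<lambda>t. ennreal (F t / c))) borel u) B
        = ennreal (\<integral>t. indicator (u -` B) t * (F t / c) \<partial>lborel)"
      if "integrable lborel F" "\<And>t. 0 \<le> F t" for F
      using 2 that B by (intro emeasure_distr_density_eq_integral) auto
    ultimately have "ennreal (\<integral>t. indicator (u -` B) t * (P t / c) \<partial>lborel)
        = ennreal (\<integral>t. indicator (u -` B) t * (N t / c) \<partial>lborel)"
      using Pi Ni Pn Nn by metis
    moreover have "0 \<le> (\<integral>t. indicator (u -` B) t * (F t / c) \<partial>lborel)" if "\<And>t. 0 \<le> F t" for F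
      using 2 that by (intro integral_nonneg_AE AE_I2) auto
    ultimately have "(\<integral>t. indicator (u -` B) t * P t \<partial>lborel) / c = (\<integral>t. indicator (u -` B) t * N t \<partial>lborel) / c"
      using Pn Nn by (simp add: ennreal_inj)
    then show ?thesis using 2 by simp
  qed
qed

lemma integral_preimage_zero_of_fourier_zero_real:
  fixes u H :: "real \<Rightarrow> real"
  assumes [measurable]: "u \<in> borel_measurable borel"
    and Hi: "integrable lborel H"
    and z: "\<And>\<tau>. (\<integral>t. H t *\<^sub>R iexp (\<tau> * u t) \<partial>lborel) = 0"
    and B: "B \<in> sets borel"
  shows "(\<integral>t. indicator (u -` B) t * H t \<partial>lborel) = 0"
proof -
  have [measurable]: "H \<in> borel_measurable borel" using Hi by (simp add: measurable_completion)
  have [measurable]: "u -` B \<in> sets borel" using measurable_sets_borel[of u borel B] B by simp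
  define P where "P t = max (H t) 0" for t
  define N where "N t = max (- H t) 0" for t
  have [measurable]: "P \<in> borel_measurable borel" "N \<in> borel_measurable borel"
    unfolding P_def N_def by measurable
  have Pi: "integrable lborel P" unfolding P_def using Hi by (intro integrable_max) auto
  have Ni: "integrable lborel N" unfolding N_def using Hi by (intro integrable_max) auto
  have HPN: "H t = P t - N t" for t unfolding P_def N_def by auto
  have Pn: "0 \<le> P t" "0 \<le> N t" for t unfolding P_def N_def by auto
  have "(\<integral>t. P t *\<^sub>R iexp (\<tau> * u t) \<partial>lborel) = (\<integral>t. N t *\<^sub>R iexp (\<tau> * u t) \<partial>lborel)" for \<tau>
  proof -
    have ip: "integrable lborel (\<lambda>t. P t *\<^sub>R iexp (\<tau> * u t))"
      by (rule Bochner_Integration.integrable_bound[OF Pi]) (auto simp: norm_exp_i_times abs_of_nonneg Pn)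
    have iN: "integrable lborel (\<lambda>t. N t *\<^sub>R iexp (\<tau> * u t))"
      by (rule Bochner_Integration.integrable_bound[OF Ni]) (auto simp: norm_exp_i_times abs_of_nonneg Pn)
    have "(\<integral>t. P t *\<^sub>R iexp (\<tau> * u t) \<partial>lborel) - (\<integral>t. N t *\<^sub>R iexp (\<tau> * u t) \<partial>lborel)
       = (\<integral>t. H t *\<^sub>R iexp (\<tau> * u t) \<partial>lborel)"
      by (subst Bochner_Integration.integral_diff[symmetric, OF ip iN]) (simp add: HPN scaleR_diff_left)
    then show ?thesis using z by simp
  qed
  then have "(\<integral>t. indicator (u -` B) t * P t \<partial>lborel) = (\<integral>t. indicator (u -` B) t * N t \<partial>lborel)"
    using Pi Ni Pn B by (intro integral_preimage_eq_of_fourier_eq) auto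
  moreover have "(\<integral>t. indicator (u -` B) t * H t \<partial>lborel) =
     (\<integral>t. indicator (u -` B) t * P t \<partial>lborel) - (\<integral>t. indicator (u -` B) t * N t \<partial>lborel)"
    using Pi Ni B
    by (subst Bochner_Integration.integral_diff[symmetric])
       (auto intro!: integrable_indicator_mult simp: HPN right_diff_distrib)
  ultimately show ?thesis by simp
qed

lemma integrable_iexp_mult:
  fixes u :: "real \<Rightarrow> real" and G :: "real \<Rightarrow> complex"
  assumes [measurable]: "u \<in> borel_measurable borel" and Gi: "integrable lborel G"
  shows "integrable lborel (\<lambda>t. iexp (\<sigma> * u t) * G t)"
proof -
  have [measurable]: "G \<in> borel_measurable borel" using Gi by (simp add: measurable_completion)
  show ?thesis
    by (rule Bochner_Integration.integrable_bound[OF Gi]) (auto simp: norm_mult norm_exp_i_times)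
qed

lemma Re_scaleR_eq_cnj: fixes z e :: complex shows "Re z *\<^sub>R e = (e * z + e * cnj z) / 2"
  by (simp add: complex_eq_iff field_simps scaleR_conv_of_real)

lemma Im_scaleR_eq_cnj: fixes z e :: complex shows "Im z *\<^sub>R e = (e * z - e * cnj z) / (2 * \<i>)"
  by (simp only: right_diff_distrib[symmetric] complex_diff_cnj scaleR_conv_of_real) (simp add: field_simps)

lemma integral_preimage_zero_of_fourier_zero:
  fixes u :: "real \<Rightarrow> real" and G :: "real \<Rightarrow> complex"
  assumes um[measurable]: "u \<in> borel_measurable borel"
    and Gi: "integrable lborel G"
    and z: "\<And>\<tau>. (\<integral>t. iexp (\<tau> * u t) * G t \<partial>lborel) = 0"
    and B: "B \<in> sets borel"
  shows "(\<integral>t. indicator (u -` B) t *\<^sub>R G t \<partial>lborel) = 0"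
proof -
  have [measurable]: "G \<in> borel_measurable borel" using Gi by (simp add: measurable_completion)
  have V: "(\<integral>t. iexp (\<sigma> * u t) * cnj (G t) \<partial>lborel) = 0" for \<sigma>
  proof -
    have "(\<integral>t. iexp (\<sigma> * u t) * cnj (G t) \<partial>lborel) = (\<integral>t. cnj (iexp (-\<sigma> * u t) * G t) \<partial>lborel)"
      by (intro Bochner_Integration.integral_cong refl) (simp add: exp_cnj)
    also have "\<dots> = cnj (\<integral>t. iexp (-\<sigma> * u t) * G t \<partial>lborel)" by (rule Bochner_Integration.integral_cnj)
    finally show ?thesis using z[of "-\<sigma>"] by simp
  qed
  have ints: "integrable lborel (\<lambda>t. iexp (\<sigma> * u t) * G t)"
    "integrable lborel (\<lambda>t. iexp (\<sigma> * u t) * cnj (G t))" for \<sigma>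
    using integrable_iexp_mult[OF um Gi, of \<sigma>] integrable_iexp_mult[OF um, of "\<lambda>t. cnj (G t)" \<sigma>] Gi
    by auto
  have "(\<integral>t. Re (G t) *\<^sub>R iexp (\<sigma> * u t) \<partial>lborel)
      = ((\<integral>t. iexp (\<sigma> * u t) * G t \<partial>lborel) + (\<integral>t. iexp (\<sigma> * u t) * cnj (G t) \<partial>lborel)) / 2" for \<sigma>
    unfolding Re_scaleR_eq_cnj using ints by (simp add: Bochner_Integration.integral_add)
  then have r1: "(\<integral>t. indicator (u -` B) t * Re (G t) \<partial>lborel) = 0"
    using z V Gi B by (intro integral_preimage_zero_of_fourier_zero_real) auto
  have "(\<integral>t. Im (G t) *\<^sub>R iexp (\<sigma> * u t) \<partial>lborel)
      = ((\<integral>t. iexp (\<sigma> * u t) * G t \<partial>lborel) - (\<integral>t. iexp (\<sigma> * u t) * cnj (G t) \<partial>lborel)) / (2 * \<i>)" for \<sigma>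
    unfolding Im_scaleR_eq_cnj using ints by (simp add: Bochner_Integration.integral_diff)
  then have r2: "(\<integral>t. indicator (u -` B) t * Im (G t) \<partial>lborel) = 0"
    using z V Gi B by (intro integral_preimage_zero_of_fourier_zero_real) auto
  have ig: "integrable lborel (\<lambda>t. indicator (u -` B) t *\<^sub>R G t)"
    using Gi measurable_sets_borel[of u borel B] B by (intro integrable_mult_indicator) auto
  show ?thesis
  proof (rule complex_eqI)
    show "Re (\<integral>t. indicator (u -` B) t *\<^sub>R G t \<partial>lborel) = Re 0"
      by (subst Bochner_Integration.integral_Re[OF ig, symmetric]) (use r1 in simp)
    show "Im (\<integral>t. indicator (u -` B) t *\<^sub>R G t \<partial>lborel) = Im 0"
      by (subst Bochner_Integration.integral_Im[OF ig, symmetric]) (use r2 in simp)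
  qed
qed

lemma set_integral_preimage_zero_of_fourier_zero:
  fixes g :: "real \<Rightarrow> complex" and u :: "real \<Rightarrow> real"
  assumes i: "set_integrable lborel {0..1} g"
    and um: "u \<in> borel_measurable borel"
    and z: "\<And>\<tau>. (LINT t:{0..1}|lborel. exp (- (\<i> * complex_of_real (\<tau> * u t))) * g t) = 0"
    and B: "B \<in> sets borel"
  shows "(LINT x:{0..1} \<inter> u -` B|lborel. g x) = 0"
proof -
  define G where "G t = indicator {0..1} t *\<^sub>R g t" for t
  have Gi: "integrable lborel G" using i unfolding G_def set_integrable_def .
  have zz: "(\<integral>t. iexp (\<sigma> * u t) * G t \<partial>lborel) = 0" for \<sigma>
  proof -
    have "(\<integral>t. iexp (\<sigma> * u t) * G t \<partial>lborel) = (LINT t:{0..1}|lborel. exp (- (\<i> * complex_of_real ((-\<sigma>) * u t))) * g t)"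
      unfolding set_lebesgue_integral_def G_def
      by (rule Bochner_Integration.integral_cong) (auto split: split_indicator)
    also have "\<dots> = 0" by (rule z)
    finally show ?thesis .
  qed
  have "(\<integral>t. indicator (u -` B) t *\<^sub>R G t \<partial>lborel) = 0"
    by (rule integral_preimage_zero_of_fourier_zero[OF um Gi zz B])
  moreover have "(\<integral>t. indicator (u -` B) t *\<^sub>R G t \<partial>lborel) = (LINT x:{0..1} \<inter> u -` B|lborel. g x)"
    unfolding set_lebesgue_integral_def G_def
    by (rule Bochner_Integration.integral_cong) (auto split: split_indicator)
  ultimately show ?thesis by simp
qed

section \<open>The coordinates of the curve and their level sets\<close>

definition invol1 :: "real \<Rightarrow> real" where "invol1 t = - t - 1/4"
definition invol2 :: "real \<Rightarrow> real" where "invol2 t = stretch_angle 2 (pi/2 - stretch_angle (1/2) (2*pi*t)) / (2*pi)"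
definition Phi_lift :: "real \<Rightarrow> real" where "Phi_lift t = invol2 (invol1 t)"
definition coord1 :: "real \<Rightarrow> real" where "coord1 t = cos (2*pi*t) - sin (2*pi*t)"
definition coord2 :: "real \<Rightarrow> real" where
  "coord2 t = (2 * cos (2*pi*t) + sin (2*pi*t)) / sqrt (1 + 3 * (cos (2*pi*t))\<^sup>2)"

lemma cos_minus_sin_eq: "cos x - sin x = sqrt 2 * cos (x + pi/4)"
  by (simp add: cos_add cos_45 sin_45 algebra_simps)

lemma cos_plus_sin_eq: "cos x + sin x = sqrt 2 * cos (x - pi/4)"
  by (simp add: cos_diff cos_45 sin_45 algebra_simps)

lemma invol2_invol2: "invol2 (invol2 t) = t"
  unfolding invol2_def using stretch_angle_inverse[of 2] stretch_angle_inverse'[of 2] by simp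

lemma two_pi_mult_eq_add_iff: "2*pi*x = 2*pi*y + 2*pi*z \<longleftrightarrow> x = y + z"
proof -
  have "2*pi*y + 2*pi*z = 2*pi*(y+z)" by (simp add: algebra_simps)
  then show ?thesis by simp
qed

lemma invol2_add_int: "invol2 (t + of_int n) = invol2 t - of_int n"
proof -
  have h1: "stretch_angle (1/2) (2*pi*(t + of_int n)) = stretch_angle (1/2) (2*pi*t) + 2*pi * of_int n"
    using stretch_angle_add_2pi_int[of "1/2" "2*pi*t" n] by (simp add: algebra_simps)
  have h2: "stretch_angle 2 (pi/2 - stretch_angle (1/2) (2*pi*t) + 2*pi * of_int (-n)) = stretch_angle 2 (pi/2 - stretch_angle (1/2) (2*pi*t)) + 2*pi * of_int (-n)"
    by (rule stretch_angle_add_2pi_int)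
  have "invol2 (t + of_int n) = stretch_angle 2 (pi/2 - stretch_angle (1/2) (2*pi*t) + 2*pi * of_int (-n)) / (2*pi)"
    unfolding invol2_def h1 by (simp add: algebra_simps)
  also have "\<dots> = (stretch_angle 2 (pi/2 - stretch_angle (1/2) (2*pi*t)) - 2*pi * of_int n) / (2*pi)"
    unfolding h2 by simp
  also have "\<dots> = invol2 t - of_int n" unfolding invol2_def by (simp add: field_simps)
  finally show ?thesis .
qed

lemma invol2_add_1: "invol2 (t + 1) = invol2 t - 1"
  using invol2_add_int[of t 1] by simp

lemma invol2_decreasing: "x < y \<Longrightarrow> invol2 y < invol2 x"
  unfolding invol2_def using strict_mono_stretch_angle[of 2] strict_mono_stretch_angle[of "1/2"]
  by (simp add: strict_mono_less divide_strict_right_mono)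

lemma continuous_on_invol2: "continuous_on UNIV invol2"
  unfolding invol2_def
  by (intro continuous_intros continuous_on_compose2[OF continuous_on_stretch_angle[of 2]] continuous_on_compose2[OF continuous_on_stretch_angle[of "1/2"]]) auto

lemma coord2_eq_stretch_angle: "coord2 t = cos (stretch_angle (1/2) (2*pi*t)) + sin (stretch_angle (1/2) (2*pi*t))"
proof -
  define c where "c = cos (2*pi*t)"
  define s where "s = sin (2*pi*t)"
  have cs: "c\<^sup>2 + s\<^sup>2 = 1" unfolding c_def s_def by simp
  have e: "c\<^sup>2 + (1/2)\<^sup>2 * s\<^sup>2 = (1 + 3 * c\<^sup>2) / 4" using cs by (simp add: field_simps)
  have sq: "sqrt (c\<^sup>2 + (1/2)\<^sup>2 * s\<^sup>2) = sqrt (1 + 3 * c\<^sup>2) / 2"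
    unfolding e by (simp add: real_sqrt_divide)
  have cA: "cos (stretch_angle (1/2) (2*pi*t)) = 2 * c / sqrt (1 + 3 * c\<^sup>2)"
    using cos_stretch_angle[of "1/2" "2*pi*t"] unfolding c_def[symmetric] s_def[symmetric] sq by simp
  have sA: "sin (stretch_angle (1/2) (2*pi*t)) = s / sqrt (1 + 3 * c\<^sup>2)"
    using sin_stretch_angle[of "1/2" "2*pi*t"] unfolding c_def[symmetric] s_def[symmetric] sq by simp
  show ?thesis unfolding cA sA coord2_def c_def[symmetric] s_def[symmetric] by (simp add: add_divide_distrib)
qed

lemma coord1_eq_iff: "coord1 s = coord1 t \<longleftrightarrow> (\<exists>n::int. s = t + of_int n) \<or> (\<exists>n::int. s = invol1 t + of_int n)"
proof -
  have "coord1 s = coord1 t \<longleftrightarrow> cos (2 * pi * s + pi / 4) = cos (2 * pi * t + pi / 4)"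
    unfolding coord1_def cos_minus_sin_eq by simp
  also have "\<dots> \<longleftrightarrow> (\<exists>n\<in>\<int>. 2 * pi * s + pi/4 = (2*pi*t + pi/4) + 2*n*pi \<or> 2 * pi * s + pi/4 = -(2*pi*t + pi/4) + 2*n*pi)"
    by (rule cos_eq)
  also have "\<dots> \<longleftrightarrow> (\<exists>n\<in>\<int>. s = t + n \<or> s = invol1 t + n)"
  proof -
    have "\<And>n. (2 * pi * s + pi/4 = (2*pi*t + pi/4) + 2*n*pi) \<longleftrightarrow> 2 * pi * s = 2*pi*t + 2*pi*n"
      by (auto simp: algebra_simps)
    then have a: "\<And>n. (2 * pi * s + pi/4 = (2*pi*t + pi/4) + 2*n*pi) \<longleftrightarrow> s = t + n"
      by (simp only: two_pi_mult_eq_add_iff)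
    have "\<And>n. (2 * pi * s + pi/4 = -(2*pi*t + pi/4) + 2*n*pi) \<longleftrightarrow> 2 * pi * s = 2*pi*(invol1 t) + 2*pi*n"
      unfolding invol1_def by (auto simp: algebra_simps)
    then have b: "\<And>n. (2 * pi * s + pi/4 = -(2*pi*t + pi/4) + 2*n*pi) \<longleftrightarrow> s = invol1 t + n"
      by (simp only: two_pi_mult_eq_add_iff)
    show ?thesis using a b by simp
  qed
  also have "\<dots> \<longleftrightarrow> (\<exists>n::int. s = t + of_int n) \<or> (\<exists>n::int. s = invol1 t + of_int n)"
    by (auto elim!: Ints_cases)
  finally show ?thesis .
qed

lemma coord2_eq_iff: "coord2 s = coord2 t \<longleftrightarrow> (\<exists>n::int. s = t + of_int n) \<or> (\<exists>n::int. s = invol2 t + of_int n)"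
proof -
  define A where "A x = stretch_angle (1/2) (2*pi*x)" for x
  have "coord2 s = coord2 t \<longleftrightarrow> cos (A s - pi/4) = cos (A t - pi/4)"
    unfolding coord2_eq_stretch_angle cos_plus_sin_eq A_def by simp
  also have "\<dots> \<longleftrightarrow> (\<exists>n\<in>\<int>. A s - pi/4 = (A t - pi/4) + 2*n*pi \<or> A s - pi/4 = -(A t - pi/4) + 2*n*pi)"
    by (rule cos_eq)
  also have "\<dots> \<longleftrightarrow> (\<exists>n::int. A s = A t + 2*pi* of_int n \<or> A s = (pi/2 - A t) + 2*pi* of_int n)"
    by (auto elim!: Ints_cases simp: algebra_simps)
  also have "\<dots> \<longleftrightarrow> (\<exists>n::int. s = t + of_int n \<or> s = invol2 t + of_int n)"
  proof -
    have inv: "stretch_angle 2 (A x) = 2*pi*x" for x unfolding A_def using stretch_angle_inverse[of 2] by simp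
    have "(A s = A t + 2*pi* of_int n) \<longleftrightarrow> s = t + of_int n" for n
    proof
      assume "A s = A t + 2*pi* of_int n"
      then have "stretch_angle 2 (A s) = stretch_angle 2 (A t) + 2*pi* of_int n" using stretch_angle_add_2pi_int by simp
      then show "s = t + of_int n" unfolding inv by (simp add: two_pi_mult_eq_add_iff)
    next
      assume "s = t + of_int n"
      then show "A s = A t + 2*pi* of_int n" unfolding A_def using stretch_angle_add_2pi_int[of "1/2" "2*pi*t" n]
        by (simp add: algebra_simps)
    qed
    moreover have "(A s = (pi/2 - A t) + 2*pi* of_int n) \<longleftrightarrow> s = invol2 t + of_int n" for n
    proof
      assume "A s = (pi/2 - A t) + 2*pi* of_int n"
      then have "stretch_angle 2 (A s) = stretch_angle 2 (pi/2 - A t) + 2*pi* of_int n" using stretch_angle_add_2pi_int by simp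
      then have "2 * pi * s = 2 * pi * invol2 t + 2 * pi * of_int n" using inv unfolding invol2_def A_def by simp
      then show "s = invol2 t + of_int n" by (simp only: two_pi_mult_eq_add_iff)
    next
      assume "s = invol2 t + of_int n"
      then have "2 * pi * s = stretch_angle 2 (pi/2 - A t) + 2*pi* of_int n" unfolding invol2_def A_def by (simp add: field_simps)
      then have "A s = stretch_angle (1/2) (stretch_angle 2 (pi/2 - A t) + 2*pi* of_int n)" unfolding A_def by simp
      then show "A s = (pi/2 - A t) + 2*pi* of_int n" using stretch_angle_add_2pi_int[of "1/2"] stretch_angle_inverse'[of 2] by simp
    qed
    ultimately show ?thesis by simp
  qed
  finally show ?thesis by blast
qed

lemma invol1_decreasing: "x < y \<Longrightarrow> invol1 y < invol1 x" unfolding invol1_def by simp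

lemma Phi_lift_less: "x < y \<Longrightarrow> Phi_lift x < Phi_lift y"
  unfolding Phi_lift_def using invol1_decreasing invol2_decreasing by blast

lemma strict_mono_Phi_lift: "strict_mono Phi_lift"
  using Phi_lift_less by (simp add: strict_monoI)

lemma Phi_lift_le: "x \<le> y \<Longrightarrow> Phi_lift x \<le> Phi_lift y"
  using Phi_lift_less by (cases "x = y") (auto simp: less_eq_real_def)

lemma continuous_on_Phi_lift: "continuous_on UNIV Phi_lift"
  unfolding Phi_lift_def invol1_def
  by (intro continuous_on_compose2[OF continuous_on_invol2] continuous_intros) auto

lemma Phi_lift_add_int: "Phi_lift (t + of_int n) = Phi_lift t + of_int n"
proof -
  have "invol1 (t + of_int n) = invol1 t + of_int (-n)" unfolding invol1_def by simp
  then show ?thesis unfolding Phi_lift_def using invol2_add_int[of "invol1 t" "-n"] by simp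
qed

lemma Phi_lift_add_1: "Phi_lift (t + 1) = Phi_lift t + 1" using Phi_lift_add_int[of t 1] by simp

lemma Phi_lift_quarter: "Phi_lift (of_int j / 4) = of_int j / 4 + 1/2"
proof -
  have "2 * pi * invol1 (of_int j / 4) = of_int (-j - 1) * (pi/2)" unfolding invol1_def by (simp add: field_simps)
  then have a: "stretch_angle (1/2) (2 * pi * invol1 (of_int j / 4)) = of_int (-j - 1) * (pi/2)" by (simp only: stretch_angle_int_half_pi)
  have b: "pi/2 - of_int (-j - 1) * (pi/2) = of_int (j + 2) * (pi/2)" by (simp add: field_simps)
  have "stretch_angle 2 (pi/2 - stretch_angle (1/2) (2 * pi * invol1 (of_int j / 4))) = of_int (j + 2) * (pi/2)"
    by (simp only: a b stretch_angle_int_half_pi)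
  then show ?thesis unfolding Phi_lift_def invol2_def by (simp add: field_simps)
qed

lemma Phi_lift_direction: "\<exists>l>0. cos (2*pi*Phi_lift t) = - l * cos (2*pi*t) \<and> sin (2*pi*Phi_lift t) = - 4 * l * sin (2*pi*t)"
proof -
  define c where "c = cos (2*pi*t)"
  define s where "s = sin (2*pi*t)"
  define x1 where "x1 = 2 * pi * invol1 t"
  have cx1: "cos x1 = - s" and sx1: "sin x1 = - c"
    unfolding x1_def invol1_def c_def s_def by (simp_all add: algebra_simps cos_add sin_add cos_diff sin_diff)
  define y where "y = stretch_angle (1/2) x1"
  define r1 where "r1 = sqrt ((cos x1)\<^sup>2 + (1/2)\<^sup>2 * (sin x1)\<^sup>2)"
  have r1: "r1 > 0" unfolding r1_def using cos_sq_plus_mult_sin_sq_pos[of "(1/2)\<^sup>2" x1] by simp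
  have cy: "cos y = - s / r1" and sy: "sin y = - c / (2 * r1)"
    unfolding y_def r1_def using cos_stretch_angle[of "1/2" x1] sin_stretch_angle[of "1/2" x1] cx1 sx1 by auto
  define z where "z = pi/2 - y"
  have cz: "cos z = - c / (2 * r1)" and sz: "sin z = - s / r1"
    unfolding z_def using cy sy by (simp_all add: cos_diff sin_diff)
  define r2 where "r2 = sqrt ((cos z)\<^sup>2 + 2\<^sup>2 * (sin z)\<^sup>2)"
  have r2: "r2 > 0" unfolding r2_def using cos_sq_plus_mult_sin_sq_pos[of "2\<^sup>2" z] by simp
  have w: "2*pi*Phi_lift t = stretch_angle 2 z" unfolding Phi_lift_def invol2_def z_def y_def x1_def by simp
  have cw: "cos (2*pi*Phi_lift t) = - c / (2 * r1 * r2)" and sw: "sin (2*pi*Phi_lift t) = - 4 * s / (2 * r1 * r2)"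
    unfolding w r2_def[symmetric] using cos_stretch_angle[of 2 z] sin_stretch_angle[of 2 z] cz sz r1 r2 unfolding r2_def[symmetric]
    by (auto simp: field_simps)
  show ?thesis
    by (rule exI[of _ "1 / (2 * r1 * r2)"]) (use r1 r2 cw sw in \<open>auto simp: c_def s_def field_simps\<close>)
qed

definition psi :: "real \<Rightarrow> real" where "psi t = Phi_lift (Phi_lift t) - 1"

lemma psi_fixed_point: "psi t = t \<Longrightarrow> 4 * t \<in> \<int>"
proof -
  assume p: "psi t = t"
  obtain l where l: "l > 0" "cos (2*pi*Phi_lift t) = - l * cos (2*pi*t)" "sin (2*pi*Phi_lift t) = - 4 * l * sin (2*pi*t)"
    using Phi_lift_direction by blast
  obtain l' where l': "l' > 0" "cos (2*pi*Phi_lift (Phi_lift t)) = - l' * cos (2*pi*Phi_lift t)" "sin (2*pi*Phi_lift (Phi_lift t)) = - 4 * l' * sin (2*pi*Phi_lift t)"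
    using Phi_lift_direction by blast
  have e: "2*pi*Phi_lift (Phi_lift t) = 2*pi*t + 2*pi" using p unfolding psi_def by (simp add: algebra_simps)
  have c: "cos (2*pi*t) = (l' * l) * cos (2*pi*t)"
  proof -
    have "cos (2*pi*t) = cos (2*pi*Phi_lift (Phi_lift t))" using e by simp
    also have "\<dots> = (l' * l) * cos (2*pi*t)" using l l' by simp
    finally show ?thesis .
  qed
  have s: "sin (2*pi*t) = 16 * (l' * l) * sin (2*pi*t)"
  proof -
    have "sin (2*pi*t) = sin (2*pi*Phi_lift (Phi_lift t))" using e by simp
    also have "\<dots> = 16 * (l' * l) * sin (2*pi*t)" using l l' by simp
    finally show ?thesis .
  qed
  have "sin (2*pi*t) * cos (2*pi*t) = 0"
  proof (cases "cos (2*pi*t) = 0")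
    case False
    have "1 * cos (2*pi*t) = (l' * l) * cos (2*pi*t)" using c by simp
    then have "l' * l = 1" using False by (simp only: mult_cancel_right) simp
    then have "sin (2*pi*t) = 16 * sin (2*pi*t)" using s by simp
    then show ?thesis by simp
  qed simp
  then have "sin (2 * (2*pi*t)) = 0" by (subst sin_double) simp
  then obtain k :: int where "2 * (2*pi*t) = of_int k * pi" using sin_zero_iff_int2 by blast
  then have "4 * t = of_int k" by (simp add: field_simps)
  then show ?thesis by simp
qed

lemma Phi_lift_diff_not_Ints: "Phi_lift t - t \<notin> \<int>"
proof -
  define j where "j = floor (4 * t)"
  have j1: "of_int j / 4 \<le> t" and j2: "t \<le> of_int (j + 1) / 4"
    unfolding j_def using floor_correct[of "4*t"] by (simp_all add: field_simps)
  have "Phi_lift t \<ge> of_int j / 4 + 1/2" using Phi_lift_le[OF j1] Phi_lift_quarter[of j] by simp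
  moreover have "Phi_lift t \<le> of_int (j + 1) / 4 + 1/2" using Phi_lift_le[OF j2] Phi_lift_quarter[of "j + 1"] by simp
  ultimately have "1/4 \<le> Phi_lift t - t" "Phi_lift t - t \<le> 3/4" using j1 j2 by (simp_all add: field_simps)
  then show ?thesis
  proof (safe elim!: Ints_cases)
    fix k :: int assume "Phi_lift t - t = of_int k" "1/4 \<le> Phi_lift t - t" "Phi_lift t - t \<le> 3/4"
    then have "(0::real) < of_int k" "of_int k < (1::real)" by linarith+
    then show False by simp
  qed
qed

lemma invol1_invol1: "invol1 (invol1 t) = t" unfolding invol1_def by simp

lemma one_plus_3_cos_sq_pos: "0 < 1 + 3 * (cos (2*pi*t))\<^sup>2" by (simp add: add_pos_nonneg)

lemma continuous_on_coord1: "continuous_on UNIV coord1" unfolding coord1_def by (intro continuous_intros)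
lemma continuous_on_coord2: "continuous_on UNIV coord2"
  unfolding coord2_def using one_plus_3_cos_sq_pos by (intro continuous_intros) (auto simp: less_imp_neq[symmetric])

lemma continuous_on_invol1: "continuous_on UNIV invol1" unfolding invol1_def by (intro continuous_intros)

definition fix2 :: real where "fix2 = stretch_angle 2 (pi/4) / (2*pi)"

lemma stretch_angle_inverse_pi_quarter: "stretch_angle (1/2) (stretch_angle 2 (pi/4)) = pi/4" by (rule stretch_angle_inverse') simp

lemma invol2_fix2: "invol2 fix2 = fix2"
proof -
  have e1: "2*pi*fix2 = stretch_angle 2 (pi/4)" unfolding fix2_def by simp
  have e3: "pi/2 - pi/4 = pi/4" by simp
  have "invol2 fix2 = stretch_angle 2 (pi/2 - stretch_angle (1/2) (2*pi*fix2)) / (2*pi)" by (simp only: invol2_def)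
  also have "\<dots> = stretch_angle 2 (pi/4) / (2*pi)" by (simp only: e1 stretch_angle_inverse_pi_quarter e3)
  also have "\<dots> = fix2" by (simp add: fix2_def)
  finally show ?thesis .
qed

lemma invol2_fix2_add_half: "invol2 (fix2 + 1/2) = fix2 - 1/2"
proof -
  have e1: "2 * pi * (fix2 + 1/2) = stretch_angle 2 (pi/4) + pi" unfolding fix2_def by (simp add: field_simps)
  have e2: "stretch_angle (1/2) (stretch_angle 2 (pi/4) + pi) = pi/4 + pi" by (simp only: stretch_angle_add_pi stretch_angle_inverse_pi_quarter)
  have e3: "pi/2 - (pi/4 + pi) = pi/4 - pi" by simp
  have "invol2 (fix2 + 1/2) = stretch_angle 2 (pi/2 - stretch_angle (1/2) (2 * pi * (fix2 + 1/2))) / (2*pi)" by (simp only: invol2_def)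
  also have "\<dots> = stretch_angle 2 (pi/4 - pi) / (2*pi)" by (simp only: e1 e2 e3)
  also have "\<dots> = (stretch_angle 2 (pi/4) - pi) / (2*pi)" by (simp only: stretch_angle_diff_pi)
  also have "\<dots> = fix2 - 1/2" by (simp add: fix2_def field_simps)
  finally show ?thesis .
qed

section \<open>Integrals of one-periodic functions\<close>

definition one_periodic :: "(real \<Rightarrow> complex) \<Rightarrow> bool" where
  "one_periodic h \<longleftrightarrow> (\<forall>x. h (x + 1) = h x)"

lemma one_periodic_add_int: "one_periodic h \<Longrightarrow> h (x + of_int k) = h x"
proof (induction k arbitrary: x rule: int_induct[where k = 0])
  case base then show ?case by simp
next
  case (step1 i) then show ?case unfolding one_periodic_def by (metis add.assoc of_int_add of_int_1)
next
  case (step2 i)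
  then have "h (x + of_int (i - 1) + 1) = h (x + of_int (i - 1))" unfolding one_periodic_def by blast
  then show ?case using step2 by (simp add: algebra_simps)
qed

lemma
  assumes p: "one_periodic h"
  shows set_integral_translate_int: "(LINT x:((\<lambda>x. x + of_int k) -` E)|lborel. h x) = (LINT x:E|lborel. h x)"
    and set_integrable_translate_int_iff: "set_integrable lborel ((\<lambda>x. x + of_int k) -` E) h \<longleftrightarrow> set_integrable lborel E h"
proof -
  have eq: "(\<lambda>x. indicator E (of_int k + 1 * x) *\<^sub>R h (of_int k + 1 * x)) =
        (\<lambda>x. indicator ((\<lambda>x. x + of_int k) -` E) x *\<^sub>R h x)"
    using one_periodic_add_int[OF p] by (auto simp: indicator_def add.commute fun_eq_iff)
  show "(LINT x:((\<lambda>x. x + of_int k) -` E)|lborel. h x) = (LINT x:E|lborel. h x)"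
    unfolding set_lebesgue_integral_def
    using lborel_integral_real_affine[of 1 "\<lambda>x. indicator E x *\<^sub>R h x" "of_int k"] eq by simp
  show "set_integrable lborel ((\<lambda>x. x + of_int k) -` E) h \<longleftrightarrow> set_integrable lborel E h"
    unfolding set_integrable_def
    using lborel_integrable_real_affine_iff[of 1 "\<lambda>x. indicator E x *\<^sub>R h x" "of_int k"] eq by simp
qed

lemma set_integrable_symmetric_interval:
  assumes p: "one_periodic h" and i: "set_integrable lborel {0..1} h"
  shows "set_integrable lborel {- real n..real n} h"
proof (induction n)
  case 0
  have "set_integrable lborel {0} h"
    by (rule set_integrable_subset[OF i]) auto
  then show ?case by simp
next
  case (Suc n)
  have e1: "(\<lambda>x. x + of_int (- int n)) -` {0..1::real} = {real n..real n + 1}" by auto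
  have e2: "(\<lambda>x. x + of_int (int n + 1)) -` {0..1::real} = {- real n - 1..- real n}" by auto
  have a: "set_integrable lborel {real n..real n + 1} h"
    using set_integrable_translate_int_iff[OF p, of "- int n" "{0..1}"] i by (simp only: e1)
  have b: "set_integrable lborel {- real n - 1..- real n} h"
    using set_integrable_translate_int_iff[OF p, of "int n + 1" "{0..1}"] i by (simp only: e2)
  have U: "set_integrable lborel ({- real n - 1..- real n} \<union> {- real n..real n} \<union> {real n..real n + 1}) h"
    by (intro set_integrable_Un a b Suc) auto
  have S: "{- real (Suc n)..real (Suc n)} \<subseteq> {- real n - 1..- real n} \<union> {- real n..real n} \<union> {real n..real n + 1}"
    by auto
  show ?case using set_integrable_subset[OF U _ S] by simp
qed

lemma set_integrable_bounded:
  assumes p: "one_periodic h" and i: "set_integrable lborel {0..1} h"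
    and E: "E \<in> sets borel" "E \<subseteq> {a..b}"
  shows "set_integrable lborel E h"
proof -
  obtain n :: nat where "real n \<ge> max \<bar>a\<bar> \<bar>b\<bar>" using real_arch_simple by blast
  then have "E \<subseteq> {- real n..real n}" using E by force
  then show ?thesis using E by (intro set_integrable_subset[OF set_integrable_symmetric_interval[OF p i, of n]]) auto
qed

lemma AE_not_in_adjacent_intervals: "AE x in lborel. \<not> (x \<in> {a..b} \<and> x \<in> {b..c::real})"
  using AE_lborel_singleton[of b] by eventually_elim auto

lemma set_integral_unit_interval:
  assumes p: "one_periodic h" and i: "set_integrable lborel {0..1} h"
  shows "(LINT x:{c..c+1}|lborel. h x) = (LINT x:{0..1}|lborel. h x)"
proof -
  define n where "n = floor c"
  define d where "d = c - of_int n"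
  have d: "0 \<le> d" "d < 1" unfolding d_def n_def by linarith+
  have li: "set_integrable lborel {a..b} h" for a b by (rule set_integrable_bounded[OF p i]) auto
  have e1: "(\<lambda>x. x + of_int n) -` {c..of_int n + 1} = {d..1}" unfolding d_def by auto
  have e2: "(\<lambda>x. x + of_int (n + 1)) -` {of_int n + 1..c + 1} = {0..d}" unfolding d_def by auto
  have "(LINT x:{c..c+1}|lborel. h x) = (LINT x:{c..of_int n + 1} \<union> {of_int n + 1..c+1}|lborel. h x)"
  proof -
    have "{c..c+1} = {c..of_int n + 1} \<union> {of_int n + 1..c+1}" using d unfolding d_def by auto
    then show ?thesis by simp
  qed
  also have "\<dots> = (LINT x:{c..of_int n + 1}|lborel. h x) + (LINT x:{of_int n + 1..c+1}|lborel. h x)"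
    by (rule set_integral_Un_AE[OF AE_not_in_adjacent_intervals _ _ li li]) auto
  also have "(LINT x:{c..of_int n + 1}|lborel. h x) = (LINT x:{d..1}|lborel. h x)"
    using set_integral_translate_int[OF p, of n "{c..of_int n + 1}"] unfolding e1 by simp
  also have "(LINT x:{of_int n + 1..c+1}|lborel. h x) = (LINT x:{0..d}|lborel. h x)"
    using set_integral_translate_int[OF p, of "n + 1" "{of_int n + 1..c+1}"] unfolding e2 by simp
  also have "(LINT x:{d..1}|lborel. h x) + (LINT x:{0..d}|lborel. h x) = (LINT x:{0..d} \<union> {d..1}|lborel. h x)"
    using set_integral_Un_AE[OF AE_not_in_adjacent_intervals _ _ li li, of 0 d 1] by (simp add: add.commute)
  also have "{0..d} \<union> {d..1} = {0..1::real}" using d by auto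
  finally show ?thesis .
qed

lemma set_integral_indicator_scaleR: "(LINT x:S|M. indicator T x *\<^sub>R (f x :: complex)) = (LINT x:S \<inter> T|M. f x)"
  unfolding set_lebesgue_integral_def
  by (rule Bochner_Integration.integral_cong) (auto split: split_indicator)

lemma set_integrable_indicator_scaleR_iff: "set_integrable M S (\<lambda>x. indicator T x *\<^sub>R (f x :: complex)) \<longleftrightarrow> set_integrable M (S \<inter> T) f"
  unfolding set_integrable_def
  by (simp add: indicator_inter_arith)

lemma one_periodic_indicator_scaleR:
  assumes "one_periodic g" "\<And>x. u (x + 1) = u x"
  shows "one_periodic (\<lambda>x. indicator (u -` B) x *\<^sub>R g x)"
  using assms unfolding one_periodic_def by (simp add: indicator_def)

lemma set_integral_preimage_unit_interval:
  fixes g :: "real \<Rightarrow> complex" and u :: "real \<Rightarrow> real"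
  assumes p: "one_periodic g" and i: "set_integrable lborel {0..1} g"
    and um: "u \<in> borel_measurable borel" and up: "\<And>x. u (x + 1) = u x"
    and zero: "(LINT x:{0..1} \<inter> u -` B|lborel. g x) = 0" and B: "B \<in> sets borel"
  shows "(LINT x:{c..c+1} \<inter> u -` B|lborel. g x) = 0"
proof -
  have uB: "u -` B \<in> sets borel" using measurable_sets_borel[OF um B] by simp
  have "set_integrable lborel ({0..1} \<inter> u -` B) g"
    by (rule set_integrable_subset[OF i]) (use uB in auto)
  then have i2: "set_integrable lborel {0..1} (\<lambda>x. indicator (u -` B) x *\<^sub>R g x)"
    by (simp add: set_integrable_indicator_scaleR_iff)
  have "(LINT x:{c..c+1} \<inter> u -` B|lborel. g x) = (LINT x:{c..c+1}|lborel. indicator (u -` B) x *\<^sub>R g x)"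
    by (simp add: set_integral_indicator_scaleR)
  also have "\<dots> = (LINT x:{0..1}|lborel. indicator (u -` B) x *\<^sub>R g x)"
    by (rule set_integral_unit_interval[OF one_periodic_indicator_scaleR[of g u B, OF p up] i2])
  also have "\<dots> = 0" using zero by (simp add: set_integral_indicator_scaleR)
  finally show ?thesis .
qed

section \<open>Antisymmetry under the folding involution\<close>

text \<open>\<open>u\<close> folds the line: it identifies exactly the points of \<open>t + \<int>\<close> and \<open>\<sigma> t + \<int>\<close>,
  and \<open>[a, a + 1/2]\<close> is a fundamental domain.\<close>

locale folding_coordinate =
  fixes u \<sigma> :: "real \<Rightarrow> real" and a :: real
  assumes continuous_u: "continuous_on UNIV u"
    and continuous_\<sigma>: "continuous_on UNIV \<sigma>"
    and \<sigma>_\<sigma>: "\<And>x. \<sigma> (\<sigma> x) = x"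
    and \<sigma>_decreasing: "\<And>x y. x < y \<Longrightarrow> \<sigma> y < \<sigma> x"
    and \<sigma>_a: "\<sigma> a = a"
    and \<sigma>_add_half: "\<sigma> (a + 1/2) = a - 1/2"
    and \<sigma>_add_1: "\<And>x. \<sigma> (x + 1) = \<sigma> x - 1"
    and u_eq_iff: "\<And>s t. u s = u t \<longleftrightarrow> (\<exists>n::int. s = t + of_int n) \<or> (\<exists>n::int. s = \<sigma> t + of_int n)"
begin

lemma \<sigma>_le_iff: "\<sigma> y \<le> \<sigma> x \<longleftrightarrow> x \<le> y"
  using \<sigma>_decreasing[of x y] \<sigma>_decreasing[of y x] by (cases x y rule: linorder_cases) auto

lemma \<sigma>_diff_half: "\<sigma> (a - 1/2) = a + 1/2"
  using \<sigma>_add_half \<sigma>_\<sigma> by metis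

lemma borel_measurable_\<sigma> [measurable]: "\<sigma> \<in> borel_measurable borel"
  using continuous_\<sigma> by (rule borel_measurable_continuous_onI)

lemma borel_measurable_u [measurable]: "u \<in> borel_measurable borel"
  using continuous_u by (rule borel_measurable_continuous_onI)

lemma vimage_\<sigma>_borel: "E \<in> sets borel \<Longrightarrow> \<sigma> -` E \<in> sets borel"
  using measurable_sets_borel[OF borel_measurable_\<sigma>] by simp

lemma vimage_\<sigma>_interval: "E \<subseteq> {c..d} \<Longrightarrow> \<sigma> -` E \<subseteq> {\<sigma> d..\<sigma> c}"
proof
  fix x assume "E \<subseteq> {c..d}" and "x \<in> \<sigma> -` E"
  then have "\<sigma> (\<sigma> c) \<le> \<sigma> x" "\<sigma> x \<le> \<sigma> (\<sigma> d)" using \<sigma>_\<sigma> by auto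
  then show "x \<in> {\<sigma> d..\<sigma> c}" using \<sigma>_le_iff by auto
qed

lemma u_add_1: "u (x + 1) = u x"
  using u_eq_iff[of "x + 1" x] by (metis of_int_1)

lemma \<sigma>_add_int: "\<sigma> (x + of_int k) = \<sigma> x - of_int k"
proof (induction k arbitrary: x rule: int_induct[where k = 0])
  case base then show ?case by simp
next
  case (step1 i)
  have "\<sigma> (x + of_int (i + 1)) = \<sigma> ((x + of_int i) + 1)" by (simp add: algebra_simps)
  also have "\<dots> = \<sigma> x - of_int (i + 1)" using step1 \<sigma>_add_1 by simp
  finally show ?case .
next
  case (step2 i)
  have "\<sigma> (x + of_int (i - 1) + 1) = \<sigma> (x + of_int (i - 1)) - 1" by (rule \<sigma>_add_1)
  moreover have "x + of_int (i - 1) + 1 = x + of_int i" by simp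
  ultimately show ?case using step2 by simp
qed

lemma u_eq_in_window:
  assumes ux: "u x = u e" and e: "e \<in> {a..a+1/2}" and x: "x \<in> {a-1/2..a+1/2}"
  shows "x = e \<or> \<sigma> x = e"
proof -
  have \<sigma>e: "a - 1/2 \<le> \<sigma> e" "\<sigma> e \<le> a"
    using e \<sigma>_le_iff[of e "a + 1/2"] \<sigma>_le_iff[of a e] \<sigma>_a \<sigma>_add_half by auto
  consider (shift) n :: int where "x = e + of_int n" | (fold) n :: int where "x = \<sigma> e + of_int n"
    using u_eq_iff ux by blast
  then show ?thesis
  proof cases
    case shift
    then have "-1 \<le> (of_int n::real)" "of_int n \<le> (1/2::real)" using x e by auto
    then have "n = -1 \<or> n = 0" by linarith
    then show ?thesis
    proof
      assume "n = -1"
      then have "e = a + 1/2" "x = a - 1/2" using shift x e by auto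
      then show ?thesis using \<sigma>_diff_half by simp
    qed (use shift in simp)
  next
    case fold
    then have "-1/2 \<le> (of_int n::real)" "of_int n \<le> (1::real)" using x \<sigma>e by auto
    then have "n = 0 \<or> n = 1" by linarith
    then show ?thesis
    proof
      assume "n = 1"
      then have "\<sigma> e = a - 1/2" "x = a + 1/2" using fold x \<sigma>e by auto
      then have "e = a + 1/2" using \<sigma>_\<sigma> \<sigma>_diff_half by metis
      then show ?thesis using \<open>x = a + 1/2\<close> by simp
    qed (use fold \<sigma>_\<sigma> in simp)
  qed
qed

lemma inj_on_u: "inj_on u {a..a+1/2}"
proof (rule inj_onI)
  fix s t assume s: "s \<in> {a..a+1/2}" and t: "t \<in> {a..a+1/2}" and "u s = u t"
  then have "s = t \<or> \<sigma> s = t" using u_eq_in_window by auto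
  moreover have "\<sigma> s \<le> \<sigma> a" using s \<sigma>_le_iff[of s a] by simp
  ultimately show "s = t" using s t \<sigma>_\<sigma> \<sigma>_a by (metis atLeastAtMost_iff order_antisym)
qed

lemma image_u_borel:
  assumes E: "E \<in> sets borel" "E \<subseteq> {a..a+1/2}"
  shows "u ` E \<in> sets borel"
proof -
  define w where "w = the_inv_into {a..a+1/2} u"
  define K where "K = u ` {a..a+1/2}"
  have wu: "w (u x) = x" if "x \<in> {a..a+1/2}" for x
    unfolding w_def using the_inv_into_f_f[OF inj_on_u that] .
  have wc: "continuous_on K w" unfolding K_def
    by (rule continuous_on_inv[OF continuous_on_subset[OF continuous_u]]) (auto simp: wu)
  have "compact K" unfolding K_def
    by (rule compact_continuous_image[OF continuous_on_subset[OF continuous_u]]) auto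
  then have Kb: "K \<in> sets borel" by (simp add: compact_imp_closed borel_closed)
  have wm: "(\<lambda>y. indicator K y *\<^sub>R w y) \<in> borel_measurable borel"
    by (rule borel_measurable_continuous_on_indicator[OF Kb wc])
  have "u ` E = K \<inter> (\<lambda>y. indicator K y *\<^sub>R w y) -` E"
  proof
    show "u ` E \<subseteq> K \<inter> (\<lambda>y. indicator K y *\<^sub>R w y) -` E"
      using E(2) wu unfolding K_def by auto
    show "K \<inter> (\<lambda>y. indicator K y *\<^sub>R w y) -` E \<subseteq> u ` E"
    proof
      fix y assume y: "y \<in> K \<inter> (\<lambda>y. indicator K y *\<^sub>R w y) -` E"
      then obtain x where x: "x \<in> {a..a+1/2}" "y = u x" unfolding K_def by auto
      then have "x \<in> E" using y wu by auto
      then show "y \<in> u ` E" using x by auto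
    qed
  qed
  then show ?thesis using measurable_sets_borel[OF wm E(1)] Kb by auto
qed

lemma window_vimage_image_u:
  assumes E: "E \<subseteq> {a..a+1/2}"
  shows "{a-1/2..a+1/2} \<inter> u -` (u ` E) = E \<union> \<sigma> -` E"
proof
  show "E \<union> \<sigma> -` E \<subseteq> {a-1/2..a+1/2} \<inter> u -` (u ` E)"
  proof
    fix x assume "x \<in> E \<union> \<sigma> -` E"
    then show "x \<in> {a-1/2..a+1/2} \<inter> u -` (u ` E)"
    proof
      assume x: "x \<in> \<sigma> -` E"
      have "u x = u (\<sigma> x)" using u_eq_iff[of x "\<sigma> x"] \<sigma>_\<sigma> by (metis add_0_right of_int_0)
      moreover have "\<sigma> -` E \<subseteq> {a-1/2..a}" using vimage_\<sigma>_interval[OF E] \<sigma>_a \<sigma>_add_half by simp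
      ultimately show ?thesis using x by auto
    qed (use E in auto)
  qed
  show "{a-1/2..a+1/2} \<inter> u -` (u ` E) \<subseteq> E \<union> \<sigma> -` E"
  proof
    fix x assume x: "x \<in> {a-1/2..a+1/2} \<inter> u -` (u ` E)"
    then obtain e where e: "e \<in> E" "u x = u e" by auto
    then have "x = e \<or> \<sigma> x = e" using u_eq_in_window E x by blast
    then show "x \<in> E \<union> \<sigma> -` E" using e by auto
  qed
qed

end

locale null_pushforward = folding_coordinate u \<sigma> a for u \<sigma> :: "real \<Rightarrow> real" and a :: real +
  fixes g :: "real \<Rightarrow> complex"
  assumes periodic_g: "one_periodic g"
    and integrable_g: "set_integrable lborel {0..1} g"
    and pushforward_zero: "\<And>B. B \<in> sets borel \<Longrightarrow> (LINT x:{0..1} \<inter> u -` B|lborel. g x) = 0"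
begin

lemma set_integrable_g: "E \<in> sets borel \<Longrightarrow> E \<subseteq> {c..d} \<Longrightarrow> set_integrable lborel E g"
  by (rule set_integrable_bounded[OF periodic_g integrable_g])

lemma set_integral_vimage_\<sigma>_fundamental:
  assumes E: "E \<in> sets borel" "E \<subseteq> {a..a+1/2}"
  shows "(LINT x:\<sigma> -` E|lborel. g x) = - (LINT x:E|lborel. g x)"
proof -
  have uE: "u ` E \<in> sets borel" by (rule image_u_borel[OF E])
  have "(LINT x:{a-1/2..a-1/2+1} \<inter> u -` (u ` E)|lborel. g x) = 0"
    by (rule set_integral_preimage_unit_interval[OF periodic_g integrable_g borel_measurable_u u_add_1
        pushforward_zero[OF uE] uE])
  moreover have "a - 1/2 + 1 = a + 1/2" by simp
  ultimately have "(LINT x:{a-1/2..a+1/2} \<inter> u -` (u ` E)|lborel. g x) = 0" by metis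
  then have zero: "(LINT x:E \<union> \<sigma> -` E|lborel. g x) = 0"
    by (simp add: window_vimage_image_u[OF E(2)])
  have sE: "\<sigma> -` E \<in> sets borel" "\<sigma> -` E \<subseteq> {a-1/2..a}"
    using vimage_\<sigma>_borel[OF E(1)] vimage_\<sigma>_interval[OF E(2)] \<sigma>_a \<sigma>_add_half by auto
  have overlap: "x = a" if "x \<in> E" "x \<in> \<sigma> -` E" for x
    using that E(2) sE(2) by (meson atLeastAtMost_iff order_antisym subsetD)
  have "AE x in lborel. \<not> (x \<in> E \<and> x \<in> \<sigma> -` E)"
    using AE_lborel_singleton[of a] by eventually_elim (use overlap in blast)
  then have "(LINT x:E \<union> \<sigma> -` E|lborel. g x) = (LINT x:E|lborel. g x) + (LINT x:\<sigma> -` E|lborel. g x)"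
    using E sE by (intro set_integral_Un_AE set_integrable_g) auto
  then show ?thesis using zero by (simp add: eq_neg_iff_add_eq_0 add.commute)
qed

lemma set_integral_vimage_\<sigma>_cell:
  assumes E: "E \<in> sets borel" "E \<subseteq> {a + of_int j / 2..a + of_int j / 2 + 1/2}"
  shows "(LINT x:\<sigma> -` E|lborel. g x) = - (LINT x:E|lborel. g x)"
proof -
  define k where "k = (j + 1) div 2"
  define E' where "E' = (\<lambda>x. x + of_int k) -` E"
  have "(\<lambda>x::real. x + of_int k) \<in> borel_measurable borel" by measurable
  then have E'b: "E' \<in> sets borel" unfolding E'_def using measurable_sets_borel[OF _ E(1)] by blast
  have "\<sigma> x + of_int k = \<sigma> (x + of_int (-k))" for x using \<sigma>_add_int[of x "-k"] by simp
  then have "\<sigma> -` E' = (\<lambda>x. x + of_int (-k)) -` (\<sigma> -` E)"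
    unfolding E'_def by auto
  then have shift: "(LINT x:\<sigma> -` E'|lborel. g x) = (LINT x:\<sigma> -` E|lborel. g x)"
    "(LINT x:E'|lborel. g x) = (LINT x:E|lborel. g x)"
    unfolding E'_def by (simp_all only: set_integral_translate_int[OF periodic_g])
  have "j = 2 * k \<or> j = 2 * k - 1" unfolding k_def by presburger
  then have "(LINT x:\<sigma> -` E'|lborel. g x) = - (LINT x:E'|lborel. g x)"
  proof
    assume "j = 2 * k"
    then have "E' \<subseteq> {a..a+1/2}" using E(2) unfolding E'_def by (auto simp: field_simps)
    then show ?thesis using set_integral_vimage_\<sigma>_fundamental E'b by blast
  next
    assume "j = 2 * k - 1"
    then have "E' \<subseteq> {a - 1/2..a}" using E(2) unfolding E'_def by (auto simp: field_simps)
    then have "\<sigma> -` E' \<subseteq> {a..a+1/2}" using vimage_\<sigma>_interval[of E' "a - 1/2" a] \<sigma>_a \<sigma>_diff_half by simp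
    moreover have "\<sigma> -` (\<sigma> -` E') = E'" using \<sigma>_\<sigma> by auto
    ultimately show ?thesis
      using set_integral_vimage_\<sigma>_fundamental[of "\<sigma> -` E'"] vimage_\<sigma>_borel[OF E'b] by simp
  qed
  then show ?thesis using shift by simp
qed

lemma set_integral_vimage_\<sigma>:
  assumes E: "E \<in> sets borel" "E \<subseteq> {c..c + 1/2}"
  shows "(LINT x:\<sigma> -` E|lborel. g x) = - (LINT x:E|lborel. g x)"
proof -
  define j where "j = ceiling (2 * (c - a))"
  define q where "q = a + of_int j / 2"
  have q: "c \<le> q" "q < c + 1/2" unfolding q_def j_def
    using ceiling_correct[of "2 * (c - a)"] by (simp_all add: field_simps) linarith+
  define E1 where "E1 = E \<inter> {..<q}"
  define E2 where "E2 = E \<inter> {q..}"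
  have E1b: "E1 \<in> sets borel" and E2b: "E2 \<in> sets borel" unfolding E1_def E2_def using E(1) by auto
  have E1s: "E1 \<subseteq> {a + of_int (j - 1) / 2..a + of_int (j - 1) / 2 + 1/2}"
    using E(2) q unfolding E1_def q_def by (auto simp: field_simps)
  have E2s: "E2 \<subseteq> {a + of_int j / 2..a + of_int j / 2 + 1/2}"
    using E(2) q unfolding E2_def q_def by (auto simp: field_simps)
  have E12: "E = E1 \<union> E2" "E1 \<inter> E2 = {}" unfolding E1_def E2_def by auto
  have sE12: "\<sigma> -` E = \<sigma> -` E1 \<union> \<sigma> -` E2" "\<sigma> -` E1 \<inter> \<sigma> -` E2 = {}"
    using E12 by auto
  have iE: "set_integrable lborel E1 g" "set_integrable lborel E2 g"
    using set_integrable_g[OF E1b E1s] set_integrable_g[OF E2b E2s] .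
  have isE: "set_integrable lborel (\<sigma> -` E1) g" "set_integrable lborel (\<sigma> -` E2) g"
    using set_integrable_g[OF vimage_\<sigma>_borel[OF E1b] vimage_\<sigma>_interval[OF E1s]]
      set_integrable_g[OF vimage_\<sigma>_borel[OF E2b] vimage_\<sigma>_interval[OF E2s]] .
  have "(LINT x:\<sigma> -` E|lborel. g x) = (LINT x:\<sigma> -` E1|lborel. g x) + (LINT x:\<sigma> -` E2|lborel. g x)"
    unfolding sE12(1) by (rule set_integral_Un[OF sE12(2) isE])
  also have "\<dots> = - (LINT x:E1|lborel. g x) - (LINT x:E2|lborel. g x)"
    using set_integral_vimage_\<sigma>_cell[OF E1b E1s] set_integral_vimage_\<sigma>_cell[OF E2b E2s] by simp
  also have "\<dots> = - (LINT x:E|lborel. g x)"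
    unfolding E12(1) set_integral_Un[OF E12(2) iE] by simp
  finally show ?thesis .
qed

end

section \<open>Invariant measures of fixed-point-free increasing maps\<close>

lemma AE_zero_of_set_integrals_zero_real:
  fixes F :: "real \<Rightarrow> real"
  assumes Fi: "integrable lborel F"
    and z: "\<And>E. E \<in> sets borel \<Longrightarrow> (\<integral>x. indicator E x * F x \<partial>lborel) = 0"
  shows "AE x in lborel. F x = 0"
proof -
  have Fm[measurable]: "F \<in> borel_measurable borel" using Fi by (simp add: measurable_completion)
  define E1 where "E1 = {x. 0 < F x}"
  define E2 where "E2 = {x. F x < 0}"
  have [measurable]: "E1 \<in> sets borel" "E2 \<in> sets borel" unfolding E1_def E2_def by measurable
  have i1: "integrable lborel (\<lambda>x. indicator E1 x * F x)"
    using Fi by (subst mult.commute) (rule integrable_real_mult_indicator, auto)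
  have i2: "integrable lborel (\<lambda>x. - (indicator E2 x * F x))"
    using Fi by (intro integrable_minus) (subst mult.commute, rule integrable_real_mult_indicator, auto)
  have "AE x in lborel. indicator E1 x * F x = 0"
    using z[of E1] i1 by (subst integral_nonneg_eq_0_iff_AE[symmetric]) (auto simp: E1_def indicator_def)
  moreover have "AE x in lborel. - (indicator E2 x * F x) = 0"
    using z[of E2] i2 by (subst integral_nonneg_eq_0_iff_AE[symmetric]) (auto simp: E2_def indicator_def)
  ultimately show ?thesis
    by eventually_elim (auto simp: E1_def E2_def indicator_def split: if_splits)
qed

lemma AE_zero_on_of_set_integrals_zero:
  fixes g :: "real \<Rightarrow> complex"
  assumes D: "D \<in> sets borel" and gi: "set_integrable lborel D g"
    and z: "\<And>E. E \<in> sets borel \<Longrightarrow> E \<subseteq> D \<Longrightarrow> (LINT x:E|lborel. g x) = 0"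
  shows "AE x in lborel. x \<in> D \<longrightarrow> g x = 0"
proof -
  define f where "f x = indicator D x *\<^sub>R g x" for x
  have fi: "integrable lborel f" using gi unfolding f_def set_integrable_def .
  have zf: "(\<integral>x. indicator E x *\<^sub>R f x \<partial>lborel) = 0" if E: "E \<in> sets borel" for E
  proof -
    have "(\<integral>x. indicator E x *\<^sub>R f x \<partial>lborel) = (LINT x:E \<inter> D|lborel. g x)"
      unfolding f_def set_lebesgue_integral_def
      by (rule Bochner_Integration.integral_cong) (auto split: split_indicator)
    also have "\<dots> = 0" using z[of "E \<inter> D"] E D by auto
    finally show ?thesis .
  qed
  have ifE: "integrable lborel (\<lambda>x. indicator E x *\<^sub>R f x)" if "E \<in> sets borel" for E
    using fi that by (intro integrable_mult_indicator) auto
  have "AE x in lborel. Re (f x) = 0"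
  proof (rule AE_zero_of_set_integrals_zero_real)
    show "integrable lborel (\<lambda>x. Re (f x))" using fi by simp
    fix E :: "real set" assume E: "E \<in> sets borel"
    have "(\<integral>x. indicator E x * Re (f x) \<partial>lborel) = (\<integral>x. Re (indicator E x *\<^sub>R f x) \<partial>lborel)" by simp
    also have "\<dots> = Re (\<integral>x. indicator E x *\<^sub>R f x \<partial>lborel)"
      by (rule Bochner_Integration.integral_Re[OF ifE[OF E]])
    also have "\<dots> = 0" using zf[OF E] by simp
    finally show "(\<integral>x. indicator E x * Re (f x) \<partial>lborel) = 0" .
  qed
  moreover have "AE x in lborel. Im (f x) = 0"
  proof (rule AE_zero_of_set_integrals_zero_real)
    show "integrable lborel (\<lambda>x. Im (f x))" using fi by simp
    fix E :: "real set" assume E: "E \<in> sets borel"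
    have "(\<integral>x. indicator E x * Im (f x) \<partial>lborel) = (\<integral>x. Im (indicator E x *\<^sub>R f x) \<partial>lborel)" by simp
    also have "\<dots> = Im (\<integral>x. indicator E x *\<^sub>R f x \<partial>lborel)"
      by (rule Bochner_Integration.integral_Im[OF ifE[OF E]])
    also have "\<dots> = 0" using zf[OF E] by simp
    finally show "(\<integral>x. indicator E x * Im (f x) \<partial>lborel) = 0" .
  qed
  ultimately show ?thesis
    by eventually_elim (auto simp: f_def complex_eq_iff)
qed

lemma norm_set_integral_le_subset:
  fixes g :: "real \<Rightarrow> complex"
  assumes gi: "set_integrable lborel I g" and I: "I \<in> sets borel" and S: "S \<in> sets borel" "S \<subseteq> I"
  shows "norm (LINT x:S|lborel. g x) \<le> (LINT x:I|lborel. norm (g x))"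
proof -
  have iS: "set_integrable lborel S g" by (rule set_integrable_subset[OF gi]) (use S in auto)
  have "norm (LINT x:S|lborel. g x) \<le> (LINT x:S|lborel. norm (g x))"
    by (rule set_integral_norm_bound[OF iS])
  also have "\<dots> \<le> (LINT x:I|lborel. norm (g x))"
    unfolding set_lebesgue_integral_def
    using set_integrable_norm[OF iS] set_integrable_norm[OF gi] S
    by (intro integral_mono) (auto simp: set_integrable_def split: split_indicator)
  finally show ?thesis .
qed

lemma set_integral_zero_of_disjoint_copies:
  fixes g :: "real \<Rightarrow> complex" and E :: "nat \<Rightarrow> real set"
  assumes gi: "set_integrable lborel I g" and I: "I \<in> sets borel"
    and Eb: "\<And>n. E n \<in> sets borel" and Es: "\<And>n. E n \<subseteq> I"
    and Ev: "\<And>n. (LINT x:E n|lborel. g x) = (LINT x:E 0|lborel. g x)"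
    and disj: "\<And>m n. m \<noteq> n \<Longrightarrow> E m \<inter> E n = {}"
  shows "(LINT x:E 0|lborel. g x) = 0"
proof -
  define v where "v = (LINT x:E 0|lborel. g x)"
  define K where "K = (LINT x:I|lborel. norm (g x))"
  have iE: "set_integrable lborel (E n) g" for n by (rule set_integrable_subset[OF gi]) (use Eb Es in auto)
  have U: "(\<Union>n<N. E n) \<in> sets borel \<and> (\<Union>n<N. E n) \<subseteq> I \<and> (LINT x:(\<Union>n<N. E n)|lborel. g x) = of_nat N * v" for N
  proof (induction N)
    case 0 then show ?case by (simp add: set_lebesgue_integral_def)
  next
    case (Suc N)
    have eq: "(\<Union>n<Suc N. E n) = (\<Union>n<N. E n) \<union> E N" by (auto simp: lessThan_Suc)
    have d: "(\<Union>n<N. E n) \<inter> E N = {}"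
    proof -
      have "E n \<inter> E N = {}" if "n < N" for n using disj[of n N] that by simp
      then show ?thesis by blast
    qed
    have iU: "set_integrable lborel (\<Union>n<N. E n) g" by (rule set_integrable_subset[OF gi]) (use Suc in auto)
    have "(LINT x:(\<Union>n<Suc N. E n)|lborel. g x) = (LINT x:(\<Union>n<N. E n)|lborel. g x) + (LINT x:E N|lborel. g x)"
      unfolding eq by (rule set_integral_Un[OF d iU iE])
    also have "\<dots> = of_nat (Suc N) * v" using Suc Ev[of N] unfolding v_def by (simp add: algebra_simps)
    finally show ?case using Suc Eb Es eq by auto
  qed
  have bd: "real N * norm v \<le> K" for N
  proof -
    have "norm (of_nat N * v) \<le> K" unfolding K_def using U[of N] norm_set_integral_le_subset[OF gi I] by metis
    then show ?thesis by (simp add: norm_mult)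
  qed
  show ?thesis
  proof (rule ccontr)
    assume "(LINT x:E 0|lborel. g x) \<noteq> 0"
    then have nv: "norm v > 0" unfolding v_def by simp
    obtain N :: nat where "real N > K / norm v" using reals_Archimedean2 by blast
    then have "real N * norm v > K" using nv by (simp add: field_simps)
    then show False using bd[of N] by simp
  qed
qed

lemma strict_mono_image_interval:
  fixes \<psi> :: "real \<Rightarrow> real"
  assumes "strict_mono \<psi>"
  shows "\<psi> ` {min x y..<max x y} \<subseteq> {min (\<psi> x) (\<psi> y)..<max (\<psi> x) (\<psi> y)}"
  using assms by (cases "x \<le> y") (auto simp: strict_mono_less strict_mono_less_eq min_def max_def)

lemma disjoint_iterate_images:
  fixes \<psi> :: "real \<Rightarrow> real"
  assumes mono: "strict_mono \<psi>" and E: "E \<subseteq> {min a (\<psi> a)..<max a (\<psi> a)}" and mn: "m \<noteq> n"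
  shows "(\<psi> ^^ m) ` E \<inter> (\<psi> ^^ n) ` E = {}"
proof -
  define c where "c k = (\<psi> ^^ k) a" for k
  define J where "J k = {min (c k) (c (Suc k))..<max (c k) (c (Suc k))}" for k
  have "(\<psi> ^^ k) ` E \<subseteq> J k" for k
  proof (induction k)
    case 0 then show ?case using E by (simp add: J_def c_def)
  next
    case (Suc k)
    have "(\<psi> ^^ Suc k) ` E = \<psi> ` ((\<psi> ^^ k) ` E)" by (simp add: image_comp)
    also have "\<dots> \<subseteq> \<psi> ` J k" using Suc by blast
    also have "\<dots> \<subseteq> J (Suc k)" unfolding J_def c_def
      using strict_mono_image_interval[OF mono] by simp
    finally show ?case .
  qed
  moreover have "J m \<inter> J n = {}"
  proof (cases a "\<psi> a" rule: linorder_cases)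
    case less
    then have "c k < c (Suc k)" for k
      by (induction k) (auto simp: c_def strict_mono_less[OF mono])
    then have "strict_mono c" by (rule strict_mono_Suc_iff[THEN iffD2, rule_format])
    moreover have "J k = {c k..<c (Suc k)}" for k
      unfolding J_def using \<open>\<And>k. c k < c (Suc k)\<close>[of k] by simp
    ultimately show ?thesis using mn
      by (cases m n rule: linorder_cases) (auto simp: strict_mono_less_eq)
  next
    case equal
    then have "c k = a" for k by (induction k) (auto simp: c_def)
    then show ?thesis by (simp add: J_def)
  next
    case greater
    then have dec: "c (Suc k) < c k" for k
      by (induction k) (auto simp: c_def strict_mono_less[OF mono])
    then have "c j \<le> c k" if "k \<le> j" for j k
      using lift_Suc_antimono_le[of c] that by (meson less_imp_le)
    moreover have "J k = {c (Suc k)..<c k}" for k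
      unfolding J_def using dec[of k] by simp
    ultimately show ?thesis using mn
      by (cases m n rule: linorder_cases) (auto simp: Suc_le_eq)
  qed
  ultimately show ?thesis by blast
qed

lemma rat_orbit_interval_cover:
  fixes \<psi> :: "real \<Rightarrow> real"
  assumes cont: "continuous_on UNIV \<psi>" and x: "q < x" "x < r" "\<psi> x \<noteq> x"
  shows "\<exists>a\<in>\<rat>. a \<in> {q<..<r} \<and> x \<in> {min a (\<psi> a)..<max a (\<psi> a)}"
proof (cases "x < \<psi> x")
  case True
  obtain d where d: "d > 0" "\<And>y. dist y x < d \<Longrightarrow> dist (\<psi> y) (\<psi> x) < \<psi> x - x"
    using cont True unfolding continuous_on_iff by (metis UNIV_I diff_gt_0_iff_gt)
  obtain a where a: "a \<in> \<rat>" "max (x - d) q < a" "a < x"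
    using Rats_dense_in_real[of "max (x - d) q" x] x d by auto
  have "dist a x < d" using a by (simp add: dist_real_def)
  then have "\<psi> a > x" using d(2)[of a] by (simp add: dist_real_def abs_less_iff)
  then show ?thesis using a x by (intro bexI[of _ a]) auto
next
  case False
  then have F: "\<psi> x < x" using x(3) by simp
  obtain d where d: "d > 0" "\<And>y. dist y x < d \<Longrightarrow> dist (\<psi> y) (\<psi> x) < x - \<psi> x"
    using cont F unfolding continuous_on_iff by (metis UNIV_I diff_gt_0_iff_gt)
  obtain a where a: "a \<in> \<rat>" "x < a" "a < min (x + d) r"
    using Rats_dense_in_real[of x "min (x + d) r"] x d by auto
  have "dist a x < d" using a by (simp add: dist_real_def)
  then have "\<psi> a < x" using d(2)[of a] by (simp add: dist_real_def abs_less_iff)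
  then show ?thesis using a x by (intro bexI[of _ a]) auto
qed

lemma AE_zero_of_invariant_fixed_point_free:
  fixes g :: "real \<Rightarrow> complex" and \<psi> :: "real \<Rightarrow> real" and q r :: real
  defines "I \<equiv> {q<..<r}"
  assumes gI: "set_integrable lborel I g"
    and mono: "strict_mono \<psi>" and cont: "continuous_on UNIV \<psi>"
    and into: "\<And>x. x \<in> I \<Longrightarrow> \<psi> x \<in> I"
    and nofix: "\<And>x. x \<in> I \<Longrightarrow> \<psi> x \<noteq> x"
    and invar: "\<And>E. E \<in> sets borel \<Longrightarrow> E \<subseteq> I \<Longrightarrow> \<psi> ` E \<in> sets borel \<and> (LINT x:\<psi> ` E|lborel. g x) = (LINT x:E|lborel. g x)"
  shows "AE x in lborel. x \<in> I \<longrightarrow> g x = 0"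
proof -
  define D where "D a = {min a (\<psi> a)..<max a (\<psi> a)}" for a
  have orbit: "(\<psi> ^^ n) ` E \<in> sets borel \<and> (\<psi> ^^ n) ` E \<subseteq> I
      \<and> (LINT x:(\<psi> ^^ n) ` E|lborel. g x) = (LINT x:E|lborel. g x)"
    if "E \<in> sets borel" "E \<subseteq> I" for E n
  proof (induction n)
    case (Suc n)
    have "(\<psi> ^^ Suc n) ` E = \<psi> ` ((\<psi> ^^ n) ` E)" by (simp add: image_comp)
    then show ?case using invar[of "(\<psi> ^^ n) ` E"] Suc into by auto
  qed (use that in simp)
  have "AE x in lborel. x \<in> D a \<longrightarrow> g x = 0" if a: "a \<in> I" for a
  proof (rule AE_zero_on_of_set_integrals_zero)
    have "D a \<subseteq> I" using a into[OF a] unfolding D_def I_def by auto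
    then show "D a \<in> sets borel" "set_integrable lborel (D a) g"
      unfolding D_def by (auto intro: set_integrable_subset[OF gI])
    fix E assume E: "E \<in> sets borel" "E \<subseteq> D a"
    have "(LINT x:(\<psi> ^^ 0) ` E|lborel. g x) = 0"
      using orbit[OF E(1)] \<open>D a \<subseteq> I\<close> E(2) disjoint_iterate_images[OF mono E(2)[unfolded D_def]]
      by (intro set_integral_zero_of_disjoint_copies[OF gI, of "\<lambda>n. (\<psi> ^^ n) ` E"]) (auto simp: I_def)
    then show "(LINT x:E|lborel. g x) = 0" by simp
  qed
  then have "AE x in lborel. \<forall>a\<in>\<rat> \<inter> I. x \<in> D a \<longrightarrow> g x = 0"
    by (intro AE_ball_countable') (use countable_rat in auto)
  then show ?thesis
  proof eventually_elim
    case (elim x)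
    show ?case
    proof
      assume "x \<in> I"
      then obtain a where "a \<in> \<rat> \<inter> I" "x \<in> D a"
        using rat_orbit_interval_cover[OF cont, of q x r] nofix unfolding D_def I_def by auto
      then show "g x = 0" using elim by blast
    qed
  qed
qed

section \<open>The curve\<close>

definition cos2pi :: "real \<Rightarrow> real" where "cos2pi t = cos (2*pi*t)"
definition sin2pi :: "real \<Rightarrow> real" where "sin2pi t = sin (2*pi*t)"
definition inv_sqrt_den :: "real \<Rightarrow> real" where "inv_sqrt_den t = inverse (sqrt (1 + 3 * (cos (2*pi*t))\<^sup>2))"

text \<open>Both coordinates lie in this algebra, which is closed under differentiation; hence \<open>C\<^sup>\<infinity>\<close>.\<close>

inductive_set trig_alg :: "(real \<Rightarrow> real) set" where
  const: "(\<lambda>t. c) \<in> trig_alg"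
| cos2pi: "cos2pi \<in> trig_alg"
| sin2pi: "sin2pi \<in> trig_alg"
| inv_sqrt_den: "inv_sqrt_den \<in> trig_alg"
| add: "f \<in> trig_alg \<Longrightarrow> g \<in> trig_alg \<Longrightarrow> (\<lambda>t. f t + g t) \<in> trig_alg"
| mult: "f \<in> trig_alg \<Longrightarrow> g \<in> trig_alg \<Longrightarrow> (\<lambda>t. f t * g t) \<in> trig_alg"

lemma cos2pi_has_real_derivative: "(cos2pi has_real_derivative (- 2 * pi) * sin2pi t) (at t)"
  unfolding cos2pi_def sin2pi_def by (auto intro!: derivative_eq_intros)

lemma sin2pi_has_real_derivative: "(sin2pi has_real_derivative (2 * pi) * cos2pi t) (at t)"
  unfolding cos2pi_def sin2pi_def by (auto intro!: derivative_eq_intros)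

lemma inv_sqrt_den_has_real_derivative:
  "(inv_sqrt_den has_real_derivative 6 * pi * cos2pi t * sin2pi t * (inv_sqrt_den t * inv_sqrt_den t * inv_sqrt_den t)) (at t)"
proof -
  define h where "h t = 1 + 3 * (cos (2*pi*t))\<^sup>2" for t
  have hp: "h t > 0" for t unfolding h_def by (rule one_plus_3_cos_sq_pos)
  have dh: "(h has_real_derivative (- 12 * pi * cos (2*pi*t) * sin (2*pi*t))) (at t)"
    unfolding h_def by (rule derivative_eq_intros refl)+ (simp add: power2_eq_square)
  have ds: "((\<lambda>t. sqrt (h t)) has_real_derivative (inverse (sqrt (h t)) / 2 * (- 12 * pi * cos (2*pi*t) * sin (2*pi*t)))) (at t)"
    by (rule DERIV_chain2[OF DERIV_real_sqrt[OF hp] dh])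
  have di: "((\<lambda>t. inverse (sqrt (h t))) has_real_derivative - ((inverse (sqrt (h t)) / 2 * (- 12 * pi * cos (2*pi*t) * sin (2*pi*t))) * inverse ((sqrt (h t)) ^ Suc (Suc 0)))) (at t)"
    by (rule DERIV_inverse_fun[OF ds]) (use hp[of t] in simp)
  have eq: "- ((inverse (sqrt (h t)) / 2 * (- 12 * pi * cos (2*pi*t) * sin (2*pi*t))) * inverse ((sqrt (h t)) ^ Suc (Suc 0)))
    = 6 * pi * cos (2*pi*t) * sin (2*pi*t) * (inverse (sqrt (h t)))^3"
    using hp[of t] by (simp add: power3_eq_cube power2_eq_square field_simps)
  have "((\<lambda>t. inverse (sqrt (h t))) has_real_derivative
      6 * pi * cos (2*pi*t) * sin (2*pi*t) * (inverse (sqrt (h t)))^3) (at t)"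
    using di[unfolded eq] .
  then show ?thesis unfolding inv_sqrt_den_def[abs_def] cos2pi_def sin2pi_def h_def by (simp add: power3_eq_cube)
qed

lemma trig_alg_has_derivative_in_trig_alg:
  "f \<in> trig_alg \<Longrightarrow> \<exists>f'\<in>trig_alg. \<forall>t. (f has_real_derivative f' t) (at t)"
proof (induction rule: trig_alg.induct)
  case (const c) then show ?case by (rule bexI[of _ "\<lambda>t. 0"]) (auto intro: trig_alg.const)
next
  case cos2pi
  show ?case
    by (rule bexI[of _ "\<lambda>t. (- 2 * pi) * sin2pi t"])
       (use cos2pi_has_real_derivative in blast, rule trig_alg.mult[OF trig_alg.const trig_alg.sin2pi])
next
  case sin2pi
  show ?case
    by (rule bexI[of _ "\<lambda>t. (2 * pi) * cos2pi t"])
       (use sin2pi_has_real_derivative in blast, rule trig_alg.mult[OF trig_alg.const trig_alg.cos2pi])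
next
  case inv_sqrt_den
  show ?case
    by (rule bexI[of _ "\<lambda>t. 6 * pi * cos2pi t * sin2pi t * (inv_sqrt_den t * inv_sqrt_den t * inv_sqrt_den t)"])
       (use inv_sqrt_den_has_real_derivative in blast,
        intro trig_alg.mult trig_alg.const trig_alg.cos2pi trig_alg.sin2pi trig_alg.inv_sqrt_den)
next
  case (add f g)
  then obtain f' g' where d: "f' \<in> trig_alg" "g' \<in> trig_alg"
    "\<forall>t. (f has_real_derivative f' t) (at t)" "\<forall>t. (g has_real_derivative g' t) (at t)"
    by blast
  show ?case
    by (rule bexI[of _ "\<lambda>t. f' t + g' t"]) (use d in \<open>blast intro: derivative_intros trig_alg.add\<close>)+
next
  case (mult f g)
  then obtain f' g' where d: "f' \<in> trig_alg" "g' \<in> trig_alg"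
    "\<forall>t. (f has_real_derivative f' t) (at t)" "\<forall>t. (g has_real_derivative g' t) (at t)"
    by blast
  have "\<forall>t. ((\<lambda>t. f t * g t) has_real_derivative f t * g' t + f' t * g t) (at t)"
    using d(3,4) by (auto intro!: derivative_eq_intros)
  moreover have "(\<lambda>t. f t * g' t + f' t * g t) \<in> trig_alg"
    using mult d by (intro trig_alg.add trig_alg.mult)
  ultimately show ?case by (intro bexI[of _ "\<lambda>t. f t * g' t + f' t * g t"]) auto
qed

lemma deriv_in_trig_alg:
  assumes "f \<in> trig_alg"
  shows "deriv f \<in> trig_alg" and "(f has_real_derivative deriv f t) (at t)"
proof -
  obtain f' where f': "f' \<in> trig_alg" "\<And>t. (f has_real_derivative f' t) (at t)"
    using trig_alg_has_derivative_in_trig_alg[OF assms] by blast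
  then have "deriv f = f'" using DERIV_imp_deriv by blast
  then show "deriv f \<in> trig_alg" "(f has_real_derivative deriv f t) (at t)" using f' by simp_all
qed

lemma iterated_deriv_in_trig_alg: "f \<in> trig_alg \<Longrightarrow> (deriv ^^ n) f \<in> trig_alg"
  by (induction n) (auto intro: deriv_in_trig_alg)

lemma coord1_in_trig_alg: "coord1 \<in> trig_alg"
proof -
  have e: "coord1 = (\<lambda>t. cos2pi t + (\<lambda>t. -1) t * sin2pi t)" unfolding coord1_def cos2pi_def sin2pi_def by auto
  show ?thesis unfolding e by (rule trig_alg.add[OF trig_alg.cos2pi trig_alg.mult[OF trig_alg.const trig_alg.sin2pi]])
qed

lemma coord2_eq: "coord2 = (\<lambda>t. (2 * cos2pi t + sin2pi t) * inv_sqrt_den t)"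
  unfolding coord2_def cos2pi_def sin2pi_def inv_sqrt_den_def by (auto simp: divide_inverse)

lemma coord2_in_trig_alg: "coord2 \<in> trig_alg"
proof -
  have e: "coord2 = (\<lambda>t. (\<lambda>t. (\<lambda>t. 2) t * cos2pi t + sin2pi t) t * inv_sqrt_den t)" unfolding coord2_eq ..
  show ?thesis unfolding e
    by (rule trig_alg.mult[OF trig_alg.add[OF trig_alg.mult[OF trig_alg.const trig_alg.cos2pi] trig_alg.sin2pi] trig_alg.inv_sqrt_den])
qed

definition curve :: "real \<Rightarrow> real \<times> real" where "curve t = (coord1 t, coord2 t)"

lemma smooth_curve_curve: "smooth_curve curve"
  unfolding smooth_curve_def
proof (intro exI[of _ "\<lambda>n t. ((deriv ^^ n) coord1 t, (deriv ^^ n) coord2 t)"] conjI allI)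
  show "(\<lambda>t. ((deriv ^^ 0) coord1 t, (deriv ^^ 0) coord2 t)) = curve" by (simp add: curve_def fun_eq_iff)
  fix n t
  have "((deriv ^^ n) coord1 has_real_derivative (deriv ^^ Suc n) coord1 t) (at t)"
    "((deriv ^^ n) coord2 has_real_derivative (deriv ^^ Suc n) coord2 t) (at t)"
    using deriv_in_trig_alg(2)[OF iterated_deriv_in_trig_alg] coord1_in_trig_alg coord2_in_trig_alg by simp_all
  then show "((\<lambda>t. ((deriv ^^ n) coord1 t, (deriv ^^ n) coord2 t)) has_vector_derivative
      ((deriv ^^ Suc n) coord1 t, (deriv ^^ Suc n) coord2 t)) (at t)"
    unfolding has_real_derivative_iff_has_vector_derivative by (intro has_vector_derivative_Pair)
qed

lemma inv_sqrt_den_pos: "inv_sqrt_den t > 0" unfolding inv_sqrt_den_def using one_plus_3_cos_sq_pos[of t] by simp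

lemma inv_sqrt_den_sq: "(inv_sqrt_den t)\<^sup>2 * (1 + 3 * (cos2pi t)\<^sup>2) = 1"
  unfolding inv_sqrt_den_def cos2pi_def using one_plus_3_cos_sq_pos[of t] by (simp add: power_inverse)

definition dcoord1 :: "real \<Rightarrow> real" where "dcoord1 t = - 2 * pi * sin2pi t - 2 * pi * cos2pi t"
definition dcoord2 :: "real \<Rightarrow> real" where
  "dcoord2 t = (- 4 * pi * sin2pi t + 2 * pi * cos2pi t) * inv_sqrt_den t + (2 * cos2pi t + sin2pi t) * (6 * pi * cos2pi t * sin2pi t * (inv_sqrt_den t * inv_sqrt_den t * inv_sqrt_den t))"

lemma coord1_has_real_derivative: "(coord1 has_real_derivative dcoord1 t) (at t)"
  unfolding coord1_def dcoord1_def cos2pi_def sin2pi_def by (auto intro!: derivative_eq_intros)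

lemma coord2_has_real_derivative: "(coord2 has_real_derivative dcoord2 t) (at t)"
proof -
  have "((\<lambda>t. (2 * cos2pi t + sin2pi t) * inv_sqrt_den t) has_real_derivative dcoord2 t) (at t)"
    unfolding dcoord2_def by (rule derivative_eq_intros cos2pi_has_real_derivative sin2pi_has_real_derivative inv_sqrt_den_has_real_derivative refl)+ (simp add: algebra_simps)
  then show ?thesis unfolding coord2_eq .
qed

lemma curve_has_vector_derivative: "(curve has_vector_derivative (dcoord1 t, dcoord2 t)) (at t)"
  unfolding curve_def[abs_def]
  using coord1_has_real_derivative[of t] coord2_has_real_derivative[of t] unfolding has_real_derivative_iff_has_vector_derivative
  by (intro has_vector_derivative_Pair)

lemma vector_derivative_curve: "vector_derivative curve (at t) = (dcoord1 t, dcoord2 t)"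
  by (rule vector_derivative_at[OF curve_has_vector_derivative])

lemma vector_derivative_curve_nonzero: "vector_derivative curve (at t) \<noteq> 0"
proof
  assume "vector_derivative curve (at t) = 0"
  then have d1: "dcoord1 t = 0" and d2: "dcoord2 t = 0" unfolding vector_derivative_curve by (simp_all add: zero_prod_def)
  define C where "C = cos2pi t"
  define S where "S = sin2pi t"
  define R where "R = inv_sqrt_den t"
  have cs: "C\<^sup>2 + S\<^sup>2 = 1" unfolding C_def S_def cos2pi_def sin2pi_def by simp
  have Rp: "R > 0" unfolding R_def by (rule inv_sqrt_den_pos)
  have Rs: "R\<^sup>2 * (1 + 3 * C\<^sup>2) = 1" unfolding R_def C_def by (rule inv_sqrt_den_sq)
  have "2 * pi * (S + C) = 0" using d1 unfolding dcoord1_def C_def[symmetric] S_def[symmetric] by (simp add: algebra_simps)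
  then have SC: "S = - C" by (simp add: add_eq_0_iff2)
  have "(- 4 * pi * S + 2 * pi * C) * R + (2 * C + S) * (6 * pi * C * S * (R * R * R)) = 0"
    using d2 unfolding dcoord2_def C_def S_def R_def .
  then have "R * (6 * pi * C * (1 - C\<^sup>2 * R\<^sup>2)) = 0" unfolding SC by (simp add: algebra_simps power2_eq_square)
  then have "C = 0 \<or> C\<^sup>2 * R\<^sup>2 = 1" using Rp by simp
  then show False
  proof
    assume "C = 0" then show False using cs SC by simp
  next
    assume h: "C\<^sup>2 * R\<^sup>2 = 1"
    have "R\<^sup>2 + 3 * (C\<^sup>2 * R\<^sup>2) = 1" using Rs by (simp add: algebra_simps)
    then have "R\<^sup>2 = -2" using h by simp
    then show False using zero_le_power2[of R] by linarith
  qed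
qed

lemma curve_add_1: "curve (t + 1) = curve t"
  unfolding curve_def coord1_def coord2_def by (simp add: distrib_left)

lemma cos2pi_add_1: "cos2pi (t + 1) = cos2pi t" unfolding cos2pi_def by (simp add: distrib_left)
lemma sin2pi_add_1: "sin2pi (t + 1) = sin2pi t" unfolding sin2pi_def by (simp add: distrib_left)
lemma inv_sqrt_den_add_1: "inv_sqrt_den (t + 1) = inv_sqrt_den t" unfolding inv_sqrt_den_def by (simp add: distrib_left)

lemma vector_derivative_curve_add_1: "vector_derivative curve (at (t + 1)) = vector_derivative curve (at t)"
  unfolding vector_derivative_curve dcoord1_def dcoord2_def cos2pi_add_1 sin2pi_add_1 inv_sqrt_den_add_1 ..

lemma curve_eq_imp_diff_Ints: "curve s = curve t \<Longrightarrow> s - t \<in> \<int>"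
proof -
  assume e: "curve s = curve t"
  then have e1: "coord1 s = coord1 t" and e2: "coord2 s = coord2 t" unfolding curve_def by auto
  show ?thesis
  proof (rule ccontr)
    assume nz: "s - t \<notin> \<int>"
    have nt: "\<not> (\<exists>n::int. s = t + of_int n)"
    proof
      assume "\<exists>n::int. s = t + of_int n"
      then obtain n :: int where "s = t + of_int n" by blast
      then have "s - t = of_int n" by simp
      then show False using nz by simp
    qed
    obtain n :: int where n: "s = invol1 t + of_int n" using e1 nt unfolding coord1_eq_iff by blast
    obtain m :: int where m: "s = invol2 t + of_int m" using e2 nt unfolding coord2_eq_iff by blast
    define y where "y = invol1 t"
    have ty: "t = invol1 y" unfolding y_def by (simp add: invol1_invol1)
    have "Phi_lift y = invol2 t" unfolding Phi_lift_def ty[symmetric] ..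
    also have "invol2 t = s - of_int m" using m by simp
    finally have "Phi_lift y - y = (s - of_int m) - (s - of_int n)" using n unfolding y_def by simp
    then have "Phi_lift y - y = of_int (n - m)" by simp
    then show False using Phi_lift_diff_not_Ints[of y] by (metis Ints_of_int)
  qed
qed

lemma smooth_closed_curve_curve: "smooth_closed_curve curve"
  unfolding smooth_closed_curve_def
  using smooth_curve_curve curve_add_1 curve_eq_imp_diff_Ints vector_derivative_curve_nonzero by blast

section \<open>The circle map and its rotation number\<close>

lemma level_set_frac_pair:
  fixes u \<sigma> :: "real \<Rightarrow> real"
  assumes lev: "\<And>s t. u s = u t \<longleftrightarrow> (\<exists>n::int. s = t + of_int n) \<or> (\<exists>n::int. s = \<sigma> t + of_int n)"
  shows "{t \<in> {0..<1}. u t = u s} = {frac s, frac (\<sigma> s)}"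
proof
  show "{t \<in> {0..<1}. u t = u s} \<subseteq> {frac s, frac (\<sigma> s)}"
  proof
    fix t assume t: "t \<in> {t \<in> {0..<1}. u t = u s}"
    then consider (A) n :: int where "t = s + of_int n" | (B) n :: int where "t = \<sigma> s + of_int n"
      using lev by blast
    then show "t \<in> {frac s, frac (\<sigma> s)}"
    proof cases
      case A then have "frac s = t" using t unfolding frac_unique_iff by simp
      then show ?thesis by simp
    next
      case B then have "frac (\<sigma> s) = t" using t unfolding frac_unique_iff by simp
      then show ?thesis by simp
    qed
  qed
  show "{frac s, frac (\<sigma> s)} \<subseteq> {t \<in> {0..<1}. u t = u s}"
  proof -
    have "u (frac s) = u s" unfolding lev frac_def by (intro disjI1 exI[of _ "- floor s"]) simp
    moreover have "u (frac (\<sigma> s)) = u s" unfolding lev frac_def by (intro disjI2 exI[of _ "- floor (\<sigma> s)"]) simp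
    ultimately show ?thesis by (auto simp: frac_lt_1)
  qed
qed

lemma dir_0: "dir 0 = (1, 0)"
  unfolding dir_def by simp
lemma dir_pi_half: "dir (pi/2) = (0, 1)"
  unfolding dir_def by simp

lemma level_set_curve_0: "level_set curve 0 s = {frac s, frac (invol1 s)}"
proof -
  have e: "level_set curve 0 s = {t \<in> {0..<1}. coord1 t = coord1 s}" unfolding level_set_def dir_0 curve_def by simp
  show ?thesis unfolding e by (rule level_set_frac_pair[OF coord1_eq_iff])
qed

lemma level_set_curve_pi_half: "level_set curve (pi/2) s = {frac s, frac (invol2 s)}"
proof -
  have e: "level_set curve (pi/2) s = {t \<in> {0..<1}. coord2 t = coord2 s}" unfolding level_set_def dir_pi_half curve_def by simp
  show ?thesis unfolding e by (rule level_set_frac_pair[OF coord2_eq_iff])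
qed

lemma Phi_eq_frac:
  assumes L: "level_set \<gamma> \<theta> s = {frac s, frac (\<sigma> s)}"
  shows "Phi \<gamma> \<theta> s = frac (\<sigma> s)"
proof (cases "frac (\<sigma> s) = frac s")
  case True
  then have "\<not> (\<exists>t\<in>level_set \<gamma> \<theta> s. t \<noteq> frac s)" unfolding L by auto
  then show ?thesis unfolding Phi_def using True by simp
next
  case False
  then have ex: "\<exists>t\<in>level_set \<gamma> \<theta> s. t \<noteq> frac s" unfolding L by auto
  have "(THE t. t \<in> level_set \<gamma> \<theta> s \<and> t \<noteq> frac s) = frac (\<sigma> s)"
  proof (rule the_equality)
    show "frac (\<sigma> s) \<in> level_set \<gamma> \<theta> s \<and> frac (\<sigma> s) \<noteq> frac s" using False unfolding L by simp
    fix t assume "t \<in> level_set \<gamma> \<theta> s \<and> t \<noteq> frac s"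
    then show "t = frac (\<sigma> s)" unfolding L by blast
  qed
  then show ?thesis unfolding Phi_def using ex by simp
qed

lemma Phi_curve_0: "Phi curve 0 s = frac (invol1 s)" by (rule Phi_eq_frac[OF level_set_curve_0])
lemma Phi_curve_pi_half: "Phi curve (pi/2) s = frac (invol2 s)" by (rule Phi_eq_frac[OF level_set_curve_pi_half])

lemma level_set_card_le_2: "level_set \<gamma> \<theta> s = {frac s, frac (\<sigma> s)} \<Longrightarrow> finite (level_set \<gamma> \<theta> s) \<and> card (level_set \<gamma> \<theta> s) \<le> 2"
  by (simp add: card_insert_le_m1)

lemma Phi_well_defined_curve_0: "Phi_well_defined curve 0"
  unfolding Phi_well_defined_def by (intro allI level_set_card_le_2[OF level_set_curve_0])
lemma Phi_well_defined_curve_pi_half: "Phi_well_defined curve (pi/2)"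
  unfolding Phi_well_defined_def by (intro allI level_set_card_le_2[OF level_set_curve_pi_half])

lemma frac_invol2_frac: "frac (invol2 (frac y)) = frac (invol2 y)"
proof -
  have "invol2 (frac y) = invol2 y + of_int (floor y)"
    unfolding frac_def using invol2_add_int[of y "- floor y"] by simp
  then show ?thesis by simp
qed

lemma Phi_comp_eq_frac_Phi_lift: "(Phi curve (pi/2) \<circ> Phi curve 0) x = frac (Phi_lift x)"
  unfolding comp_def Phi_curve_0 Phi_curve_pi_half Phi_lift_def by (simp add: frac_invol2_frac)

lemma is_lift_Phi_lift: "is_lift Phi_lift (Phi curve (pi/2) \<circ> Phi curve 0)"
  unfolding is_lift_def using continuous_on_Phi_lift strict_mono_Phi_lift Phi_lift_add_1 Phi_comp_eq_frac_Phi_lift by simp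

lemma orientation_preserving_Phi_comp: "orientation_preserving_circle_homeo (Phi curve (pi/2) \<circ> Phi curve 0)"
  unfolding orientation_preserving_circle_homeo_def using is_lift_Phi_lift by blast

lemma is_lift_unique_up_to_int:
  assumes F: "is_lift F \<Psi>" and G: "is_lift G \<Psi>"
  shows "\<exists>k::int. \<forall>x. F x = G x + of_int k"
proof -
  define h where "h x = F x - G x" for x
  have hc: "continuous_on UNIV h" unfolding h_def using F G unfolding is_lift_def
    by (intro continuous_intros) auto
  have hi: "h x \<in> \<int>" for x
  proof -
    have "frac (F x) = frac (G x)" using F G unfolding is_lift_def by simp
    then obtain n where "F x = G x + of_int n" by (rule frac_eqE)
    then show ?thesis unfolding h_def by simp
  qed
  have "h constant_on UNIV"
  proof (rule continuous_discrete_range_constant[OF connected_UNIV hc])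
    fix x :: real
    show "\<exists>e>0. \<forall>y. y \<in> UNIV \<and> h y \<noteq> h x \<longrightarrow> e \<le> norm (h y - h x)"
    proof (intro exI[of _ 1] conjI allI impI)
      fix y assume "y \<in> UNIV \<and> h y \<noteq> h x"
      moreover obtain a b where "h x = of_int a" "h y = of_int b" using hi[of x] hi[of y] by (auto elim!: Ints_cases)
      ultimately show "1 \<le> norm (h y - h x)" by (simp flip: of_int_diff)
    qed simp
  qed
  then obtain c where c: "\<And>x. h x = c" unfolding constant_on_def by blast
  obtain k where "c = of_int k" using hi[of 0] c by (auto elim!: Ints_cases)
  then show ?thesis using c unfolding h_def by (intro exI[of _ k]) (auto simp: algebra_simps)
qed

lemma Phi_lift_half_int: "Phi_lift (real n / 2) = real n / 2 + 1/2"
  using Phi_lift_quarter[of "2 * int n"] by simp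

lemma rho_curve_rat: "rho curve 0 (pi/2) \<in> \<rat>"
proof -
  define \<Psi> where "\<Psi> = Phi curve (pi/2) \<circ> Phi curve 0"
  define F0 where "F0 = (SOME F. is_lift F \<Psi>)"
  have F0: "is_lift F0 \<Psi>" unfolding F0_def \<Psi>_def by (rule someI[of _ Phi_lift]) (rule is_lift_Phi_lift)
  obtain k :: int where k: "\<And>x. F0 x = Phi_lift x + of_int k" using is_lift_unique_up_to_int[OF F0 is_lift_Phi_lift[folded \<Psi>_def]] by blast
  have it: "(F0 ^^ n) 0 = real n / 2 + real n * of_int k" for n
  proof (induction n)
    case 0 then show ?case by simp
  next
    case (Suc n)
    have "(F0 ^^ Suc n) 0 = F0 (real n / 2 + real n * of_int k)" using Suc.IH by simp
    also have "\<dots> = Phi_lift (real n / 2 + of_int (int n * k)) + of_int k" unfolding k by simp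
    also have "\<dots> = Phi_lift (real n / 2) + of_int (int n * k) + of_int k" by (rule arg_cong[OF Phi_lift_add_int, where f = "\<lambda>x. x + of_int k"])
    also have "\<dots> = real (Suc n) / 2 + real (Suc n) * of_int k" unfolding Phi_lift_half_int by (simp add: algebra_simps)
    finally show ?case .
  qed
  have ev: "\<forall>\<^sub>F n in sequentially. ((F0 ^^ n) 0 - 0) / real n = 1/2 + of_int k"
    using eventually_ge_at_top[of "1::nat"] by eventually_elim (simp add: it field_simps)
  have "(\<lambda>n. ((F0 ^^ n) 0 - 0) / real n) \<longlonglongrightarrow> 1/2 + of_int k"
    by (rule tendsto_eventually[OF ev])
  then have "lim (\<lambda>n. ((F0 ^^ n) 0 - 0) / real n) = 1/2 + of_int k" by (rule limI)
  then have eq: "rho curve 0 (pi/2) = frac (1/2 + of_int k)"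
    unfolding rho_def rotation_number_def F0_def[symmetric] \<Psi>_def[symmetric] by simp
  have r: "1/2 + of_int k \<in> (\<rat>::real set)" by (intro Rats_add) auto
  show ?thesis unfolding eq using r frac_in_Rats_iff by blast
qed

section \<open>Heisenberg uniqueness\<close>

lemma folding_coordinate_coord1: "folding_coordinate coord1 invol1 (-1/8)"
  by unfold_locales
    (auto simp: continuous_on_coord1 continuous_on_invol1 invol1_invol1 invol1_decreasing coord1_eq_iff,
     simp_all add: invol1_def)

lemma folding_coordinate_coord2: "folding_coordinate coord2 invol2 fix2"
  by unfold_locales
    (auto simp: continuous_on_coord2 continuous_on_invol2 invol2_invol2 invol2_decreasing coord2_eq_iff
      invol2_fix2 invol2_fix2_add_half invol2_add_1)

lemma vimage_invol2_invol1_quarter: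
  assumes "E \<subseteq> {of_int j / 4 .. of_int j / 4 + 1/4}"
  shows "invol2 -` (invol1 -` E) \<subseteq> {of_int (j+2) / 4 .. of_int (j+2) / 4 + 1/4}"
proof
  fix x assume "x \<in> invol2 -` (invol1 -` E)"
  then have z: "invol1 (invol2 x) \<in> E" by simp
  have xz: "x = Phi_lift (invol1 (invol2 x))" unfolding Phi_lift_def invol1_invol1 invol2_invol2 ..
  have "Phi_lift (of_int j / 4) \<le> x" using Phi_lift_le[of "of_int j / 4" "invol1 (invol2 x)"] z assms xz by auto
  moreover have "x \<le> Phi_lift (of_int (j + 1) / 4)"
    using Phi_lift_le[of "invol1 (invol2 x)" "of_int (j+1) / 4"] z assms xz by (auto simp: add_divide_distrib)
  ultimately show "x \<in> {of_int (j+2) / 4 .. of_int (j+2) / 4 + 1/4}"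
    unfolding Phi_lift_quarter by (simp add: field_simps)
qed

lemma image_psi: "psi ` E = (\<lambda>y. y + 1) -` (invol2 -` (invol1 -` (invol2 -` (invol1 -` E))))"
proof
  show "psi ` E \<subseteq> (\<lambda>y. y + 1) -` (invol2 -` (invol1 -` (invol2 -` (invol1 -` E))))"
    unfolding psi_def Phi_lift_def by (auto simp: invol1_invol1 invol2_invol2)
  show "(\<lambda>y. y + 1) -` (invol2 -` (invol1 -` (invol2 -` (invol1 -` E)))) \<subseteq> psi ` E"
  proof
    fix y assume "y \<in> (\<lambda>y. y + 1) -` (invol2 -` (invol1 -` (invol2 -` (invol1 -` E))))"
    then have x: "invol1 (invol2 (invol1 (invol2 (y + 1)))) \<in> E" by simp
    have "y = psi (invol1 (invol2 (invol1 (invol2 (y + 1)))))"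
      unfolding psi_def Phi_lift_def by (simp add: invol1_invol1 invol2_invol2)
    then show "y \<in> psi ` E" using x by blast
  qed
qed

lemma strict_mono_psi: "strict_mono psi"
  unfolding psi_def using Phi_lift_less by (simp add: strict_monoI)

lemma continuous_on_psi: "continuous_on UNIV psi"
  unfolding psi_def by (intro continuous_intros continuous_on_compose2[OF continuous_on_Phi_lift]) auto

lemma psi_quarter:
  assumes x: "x \<in> {of_int j / 4 <..< of_int j / 4 + 1/4}"
  shows "psi x \<in> {of_int j / 4 <..< of_int j / 4 + 1/4}" and "psi x \<noteq> x"
proof -
  have "Phi_lift (of_int j / 4) < Phi_lift x" "Phi_lift x < Phi_lift (of_int (j+1) / 4)"
    using x Phi_lift_less by (auto simp: add_divide_distrib)
  then have "of_int (j+2) / 4 < Phi_lift x" "Phi_lift x < of_int (j+2) / 4 + 1/4"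
    unfolding Phi_lift_quarter by (simp_all add: field_simps)
  then have "Phi_lift (of_int (j+2) / 4) < Phi_lift (Phi_lift x)" "Phi_lift (Phi_lift x) < Phi_lift (of_int (j+3) / 4)"
    using Phi_lift_less by (auto simp: add_divide_distrib)
  then show "psi x \<in> {of_int j / 4 <..< of_int j / 4 + 1/4}"
    unfolding psi_def Phi_lift_quarter by (simp add: field_simps)
  show "psi x \<noteq> x"
  proof
    assume "psi x = x"
    then obtain m :: int where m: "4 * x = of_int m" using psi_fixed_point by (auto elim!: Ints_cases)
    have "of_int j < (of_int m :: real)" "(of_int m :: real) < of_int j + 1" using x m by auto
    then show False by simp
  qed
qed

context
  fixes f :: "real \<times> real \<Rightarrow> complex"
  assumes AC_f: "AC_density curve f"
    and fourier_zero: "\<forall>p\<in>line 0 \<union> line (pi/2). fourier_AC curve f p = 0"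
begin

definition density :: "real \<Rightarrow> complex" where
  "density t = f (curve t) * complex_of_real (norm (vector_derivative curve (at t)))"

lemma set_integrable_density: "set_integrable lborel {0..1} density"
  using AC_f unfolding AC_density_def density_def .

lemma one_periodic_density: "one_periodic density"
  unfolding one_periodic_def density_def curve_add_1 vector_derivative_curve_add_1 by simp

lemma pushforward_coord1_zero: "B \<in> sets borel \<Longrightarrow> (LINT x:{0..1} \<inter> coord1 -` B|lborel. density x) = 0"
proof (rule set_integral_preimage_zero_of_fourier_zero[OF set_integrable_density])
  show "coord1 \<in> borel_measurable borel" by (rule borel_measurable_continuous_onI[OF continuous_on_coord1])
  fix \<tau> :: real
  have "\<tau> *\<^sub>R dir 0 \<in> line 0" unfolding line_def by blast
  then have "fourier_AC curve f (\<tau> *\<^sub>R dir 0) = 0" using fourier_zero by blast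
  then show "(LINT t:{0..1}|lborel. exp (- (\<i> * complex_of_real (\<tau> * coord1 t))) * density t) = 0"
    unfolding fourier_AC_def dir_0 density_def curve_def by (simp add: mult.assoc)
qed

lemma pushforward_coord2_zero: "B \<in> sets borel \<Longrightarrow> (LINT x:{0..1} \<inter> coord2 -` B|lborel. density x) = 0"
proof (rule set_integral_preimage_zero_of_fourier_zero[OF set_integrable_density])
  show "coord2 \<in> borel_measurable borel" by (rule borel_measurable_continuous_onI[OF continuous_on_coord2])
  fix \<tau> :: real
  have "\<tau> *\<^sub>R dir (pi/2) \<in> line (pi/2)" unfolding line_def by blast
  then have "fourier_AC curve f (\<tau> *\<^sub>R dir (pi/2)) = 0" using fourier_zero by blast
  then show "(LINT t:{0..1}|lborel. exp (- (\<i> * complex_of_real (\<tau> * coord2 t))) * density t) = 0"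
    unfolding fourier_AC_def dir_pi_half density_def curve_def by (simp add: mult.assoc)
qed

lemma null_pushforward_coord1: "null_pushforward coord1 invol1 (-1/8) density"
  unfolding null_pushforward_def null_pushforward_axioms_def
  using folding_coordinate_coord1 one_periodic_density set_integrable_density pushforward_coord1_zero by blast

lemma null_pushforward_coord2: "null_pushforward coord2 invol2 fix2 density"
  unfolding null_pushforward_def null_pushforward_axioms_def
  using folding_coordinate_coord2 one_periodic_density set_integrable_density pushforward_coord2_zero by blast

lemma set_integral_vimage_invol2_invol1:
  assumes E: "E \<in> sets borel" "E \<subseteq> {of_int j / 4 .. of_int j / 4 + 1/4}"
  shows "invol2 -` (invol1 -` E) \<in> sets borel"
    and "(LINT x:invol2 -` (invol1 -` E)|lborel. density x) = (LINT x:E|lborel. density x)"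
proof -
  define Y where "Y = invol1 -` E"
  have Yb: "Y \<in> sets borel"
    unfolding Y_def by (rule folding_coordinate.vimage_\<sigma>_borel[OF folding_coordinate_coord1 E(1)])
  have "(LINT x:Y|lborel. density x) = - (LINT x:E|lborel. density x)"
    unfolding Y_def using E
    by (intro null_pushforward.set_integral_vimage_\<sigma>[OF null_pushforward_coord1, of _ "of_int j / 4"]) auto
  moreover have "Y \<subseteq> {- of_int j / 4 - 1/2 .. - of_int j / 4 - 1/2 + 1/2}"
    using folding_coordinate.vimage_\<sigma>_interval[OF folding_coordinate_coord1 E(2)] unfolding Y_def invol1_def by auto
  then have "(LINT x:invol2 -` Y|lborel. density x) = - (LINT x:Y|lborel. density x)"
    by (rule null_pushforward.set_integral_vimage_\<sigma>[OF null_pushforward_coord2 Yb])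
  ultimately show "(LINT x:invol2 -` (invol1 -` E)|lborel. density x) = (LINT x:E|lborel. density x)"
    unfolding Y_def by simp
  show "invol2 -` (invol1 -` E) \<in> sets borel"
    using folding_coordinate.vimage_\<sigma>_borel[OF folding_coordinate_coord2 Yb] unfolding Y_def .
qed

lemma set_integral_image_psi:
  assumes E: "E \<in> sets borel" "E \<subseteq> {of_int j / 4 <..< of_int j / 4 + 1/4}"
  shows "psi ` E \<in> sets borel \<and> (LINT x:psi ` E|lborel. density x) = (LINT x:E|lborel. density x)"
proof -
  have E2: "E \<subseteq> {of_int j / 4 .. of_int j / 4 + 1/4}" using E(2) by auto
  define X where "X = invol2 -` (invol1 -` E)"
  have X: "X \<in> sets borel" "X \<subseteq> {of_int (j+2) / 4 .. of_int (j+2) / 4 + 1/4}"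
    "(LINT x:X|lborel. density x) = (LINT x:E|lborel. density x)"
    using set_integral_vimage_invol2_invol1[OF E(1) E2] vimage_invol2_invol1_quarter[OF E2]
    unfolding X_def by auto
  define W where "W = invol2 -` (invol1 -` X)"
  have W: "W \<in> sets borel" "(LINT x:W|lborel. density x) = (LINT x:X|lborel. density x)"
    using set_integral_vimage_invol2_invol1[OF X(1) X(2)] unfolding W_def by auto
  have pe: "psi ` E = (\<lambda>y. y + of_int 1) -` W" unfolding image_psi W_def X_def by simp
  have "(\<lambda>y::real. y + of_int 1) \<in> borel_measurable borel" by measurable
  then have "psi ` E \<in> sets borel" unfolding pe using measurable_sets_borel[OF _ W(1)] by blast
  moreover have "(LINT x:psi ` E|lborel. density x) = (LINT x:W|lborel. density x)"
    unfolding pe by (rule set_integral_translate_int[OF one_periodic_density])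
  ultimately show ?thesis using W X by simp
qed

lemma AE_density_zero_quarter:
  "AE x in lborel. x \<in> {of_int j / 4 <..< of_int j / 4 + 1/4} \<longrightarrow> density x = 0"
proof (rule AE_zero_of_invariant_fixed_point_free[OF _ strict_mono_psi continuous_on_psi])
  show "set_integrable lborel {of_int j / 4 <..< of_int j / 4 + 1/4} density"
    by (rule set_integrable_bounded[OF one_periodic_density set_integrable_density,
        of _ "of_int j / 4" "of_int j / 4 + 1/4"]) auto
qed (use psi_quarter set_integral_image_psi in auto)

lemma AE_density_zero: "AE t in lborel. t \<in> {0..1} \<longrightarrow> density t = 0"
proof -
  have q0: "AE x in lborel. x \<in> {0 <..< 1/4} \<longrightarrow> density x = 0" using AE_density_zero_quarter[of 0] by simp
  have q1: "AE x in lborel. x \<in> {1/4 <..< 1/2} \<longrightarrow> density x = 0" using AE_density_zero_quarter[of 1] by simp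
  have q2: "AE x in lborel. x \<in> {1/2 <..< 3/4} \<longrightarrow> density x = 0" using AE_density_zero_quarter[of 2] by simp
  have q3: "AE x in lborel. x \<in> {3/4 <..< 1} \<longrightarrow> density x = 0" using AE_density_zero_quarter[of 3] by simp
  have s: "AE x in lborel. x \<noteq> 0 \<and> x \<noteq> 1/4 \<and> x \<noteq> 1/2 \<and> x \<noteq> 3/4 \<and> x \<noteq> (1::real)"
    using AE_lborel_singleton[of "0::real"] AE_lborel_singleton[of "1/4::real"] AE_lborel_singleton[of "1/2::real"]
      AE_lborel_singleton[of "3/4::real"] AE_lborel_singleton[of "1::real"]
    by eventually_elim auto
  from q0 q1 q2 q3 s show ?thesis
  proof eventually_elim
    case (elim x)
    show ?case
    proof
      assume "x \<in> {0..1}"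
      then consider "x \<in> {0 <..< 1/4}" | "x \<in> {1/4 <..< 1/2}" | "x \<in> {1/2 <..< 3/4}" | "x \<in> {3/4 <..< 1}"
        using elim(5) by fastforce
      then show "density x = 0" using elim by cases auto
    qed
  qed
qed

lemma AC_zero_curve: "AC_zero curve f"
  using AE_density_zero unfolding AC_zero_def density_def .

end

lemma HUP_curve: "HUP curve (line 0 \<union> line (pi/2))"
  unfolding HUP_def using AC_zero_curve by blast

theorem proposition4p8:
  shows "\<exists>(\<gamma> :: real \<Rightarrow> real \<times> real) \<theta>1 \<theta>2.
    smooth_closed_curve \<gamma>
    \<and> \<theta>1 \<in> {0..<pi} \<and> \<theta>2 \<in> {0..<pi} \<and> \<theta>1 \<noteq> \<theta>2
    \<and> Phi_well_defined \<gamma> \<theta>1 \<and> Phi_well_defined \<gamma> \<theta>2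
    \<and> orientation_preserving_circle_homeo (Phi \<gamma> \<theta>2 \<circ> Phi \<gamma> \<theta>1)
    \<and> rho \<gamma> \<theta>1 \<theta>2 \<in> \<rat>
    \<and> HUP \<gamma> (line \<theta>1 \<union> line \<theta>2)"
proof (intro exI conjI)
  show "smooth_closed_curve curve" by (rule smooth_closed_curve_curve)
  show "(0::real) \<in> {0..<pi}" "pi/2 \<in> {0..<pi}" "(0::real) \<noteq> pi/2" by simp_all
  show "Phi_well_defined curve 0" "Phi_well_defined curve (pi/2)"
    by (rule Phi_well_defined_curve_0 Phi_well_defined_curve_pi_half)+
  show "orientation_preserving_circle_homeo (Phi curve (pi/2) \<circ> Phi curve 0)"
    by (rule orientation_preserving_Phi_comp)
  show "rho curve 0 (pi/2) \<in> \<rat>" by (rule rho_curve_rat)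
  show "HUP curve (line 0 \<union> line (pi/2))" by (rule HUP_curve)
qed

end
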